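(* Let $H=H_0+\sum_{i=1}^{N_c}J_iV_i$ on $N_q$ qubits with $H_0=-\sum_{n=1}^{N_q}h_nZ_n$, all $h_n>0$, and each $V_i\in\{I,X,Y,Z\}^{\otimes N_q}$. Let $|E_0\rangle=\sum_{\vec{k}\in\mathbb{N}^{N_c}}\vec{J}^{\cdot\vec{k}}C_{\vec{k}}\vec{V}^{\cdot\vec{k}}|\vec{0}\rangle$ (with $C_{\vec{k}}\in\mathbb{R}$) be the Taylor expansion in $\vec{J}$ near $0$ of the normalized ground state of $H$ with phase fixed by $\langle\vec{0}|E_0\rangle>0$. If $\vec{k}=\vec{k}_A+\vec{k}_B$ with $\vec{k}_A,\vec{k}_B\in\mathbb{N}^{N_c}$ whose supports share no qubit, then $C_{\vec{k}}=C_{\vec{k}_A}C_{\vec{k}_B}$.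
   Context: $|\vec{0}\rangle$ is the all-$|0\rangle$ computational basis state. $\mathbb{N}$ includes $0$. For a vector of numbers $\vec{a}$, $\vec{a}^{\cdot\vec{k}}=\prod_ia_i^{k_i}$; for operators, $\vec{V}^{\cdot\vec{k}}=V_{N_c}^{k_{N_c}}\cdots V_1^{k_1}$. The couplings activated in $\vec{k}$ are the $V_i$ with $k_i\neq0$; the support of $\vec{k}$ is the set of qubits on which at least one activated coupling acts non-trivially (i.e. as $X$, $Y$ or $Z$). *)

theory Defs
  imports "HOL-Analysis.Analysis"
begin

text \<open>Qubits are indexed 0..Nq-1, couplings 0..Nc-1 (the paper uses 1-based
indices). A computational basis state is the set x of qubits that are in state |1>;
states of the Nq-qubit register are functions  nat set => complex  supported on subsets
of {..<Nq}. A Pauli string is a function  nat => pauli  (identity on qubits >= Nq).\<close>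

datatype pauli = PI | PX | PY | PZ

type_synonym state = "nat set \<Rightarrow> complex"

definition flips :: "(nat \<Rightarrow> pauli) \<Rightarrow> nat set" where
  "flips P = {n. P n = PX \<or> P n = PY}"

text \<open>Single qubit phase: P|b> = phase * |b'>, with X|b>=|1-b>, Y|b> = i(-1)^b|1-b>,
Z|b> = (-1)^b|b>.\<close>
fun pauli_phase :: "pauli \<Rightarrow> bool \<Rightarrow> complex" where
  "pauli_phase PI b = 1"
| "pauli_phase PX b = 1"
| "pauli_phase PY b = (if b then - \<i> else \<i>)"
| "pauli_phase PZ b = (if b then -1 else 1)"

definition string_phase :: "(nat \<Rightarrow> pauli) \<Rightarrow> nat set \<Rightarrow> complex" where
  "string_phase P x = (\<Prod>n\<in>{n. P n \<noteq> PI}. pauli_phase (P n) (n \<in> x))"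

text \<open>Action of a Pauli string on a state: P|x> = phase(P,x) |x xor flips P>.\<close>
definition apply_pauli :: "(nat \<Rightarrow> pauli) \<Rightarrow> state \<Rightarrow> state" where
  "apply_pauli P v = (\<lambda>y. string_phase P (y \<union> flips P - (y \<inter> flips P)) *
                          v (y \<union> flips P - (y \<inter> flips P)))"

definition is_pauli_string :: "nat \<Rightarrow> (nat \<Rightarrow> pauli) \<Rightarrow> bool" where
  "is_pauli_string Nq P \<longleftrightarrow> (\<forall>n\<ge>Nq. P n = PI)"

definition Zop :: "nat \<Rightarrow> nat \<Rightarrow> pauli" where
  "Zop n = (\<lambda>m. if m = n then PZ else PI)"

definition hamiltonian ::
  "nat \<Rightarrow> (nat \<Rightarrow> real) \<Rightarrow> nat \<Rightarrow> (nat \<Rightarrow> nat \<Rightarrow> pauli) \<Rightarrow> (nat \<Rightarrow> real) \<Rightarrow> state \<Rightarrow> state" where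
  "hamiltonian Nq h Nc V J v =
     (\<lambda>y. - (\<Sum>n<Nq. complex_of_real (h n) * apply_pauli (Zop n) v y)
          + (\<Sum>i<Nc. complex_of_real (J i) * apply_pauli (V i) v y))"

definition qstates :: "nat \<Rightarrow> state set" where
  "qstates Nq = {v. \<forall>x. \<not> x \<subseteq> {..<Nq} \<longrightarrow> v x = 0}"

definition sq_norm :: "nat \<Rightarrow> state \<Rightarrow> real" where
  "sq_norm Nq v = (\<Sum>x\<in>Pow {..<Nq}. (cmod (v x))\<^sup>2)"

definition is_eigenpair :: "nat \<Rightarrow> (state \<Rightarrow> state) \<Rightarrow> complex \<Rightarrow> state \<Rightarrow> bool" where
  "is_eigenpair Nq A lam v \<longleftrightarrow> v \<in> qstates Nq \<and> v \<noteq> (\<lambda>_. 0) \<and> A v = (\<lambda>x. lam * v x)"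

definition is_eigenvalue :: "nat \<Rightarrow> (state \<Rightarrow> state) \<Rightarrow> complex \<Rightarrow> bool" where
  "is_eigenvalue Nq A lam \<longleftrightarrow> (\<exists>v. is_eigenpair Nq A lam v)"

definition is_ground_state :: "nat \<Rightarrow> (state \<Rightarrow> state) \<Rightarrow> state \<Rightarrow> bool" where
  "is_ground_state Nq A v \<longleftrightarrow>
     (\<exists>e::real. is_eigenpair Nq A (complex_of_real e) v \<and>
        (\<forall>mu. is_eigenvalue Nq A mu \<longrightarrow> e \<le> Re mu))"

definition is_phased_ground_state :: "nat \<Rightarrow> (state \<Rightarrow> state) \<Rightarrow> state \<Rightarrow> bool" where
  "is_phased_ground_state Nq A v \<longleftrightarrow>
     is_ground_state Nq A v \<and> sq_norm Nq v = 1 \<and> Im (v {}) = 0 \<and> Re (v {}) > 0"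

definition ket0 :: state where
  "ket0 = (\<lambda>x. if x = {} then 1 else 0)"

definition multi_idx :: "nat \<Rightarrow> (nat \<Rightarrow> nat) set" where
  "multi_idx Nc = {k. \<forall>i\<ge>Nc. k i = 0}"

fun op_pow :: "(nat \<Rightarrow> nat \<Rightarrow> pauli) \<Rightarrow> (nat \<Rightarrow> nat) \<Rightarrow> nat \<Rightarrow> state \<Rightarrow> state" where
  "op_pow V k 0 v = v"
| "op_pow V k (Suc m) v = (apply_pauli (V m) ^^ k m) (op_pow V k m v)"

definition mono_pow :: "nat \<Rightarrow> (nat \<Rightarrow> real) \<Rightarrow> (nat \<Rightarrow> nat) \<Rightarrow> real" where
  "mono_pow Nc J k = (\<Prod>i<Nc. J i ^ k i)"

definition support :: "nat \<Rightarrow> (nat \<Rightarrow> nat \<Rightarrow> pauli) \<Rightarrow> (nat \<Rightarrow> nat) \<Rightarrow> nat set" where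
  "support Nc V k = {n. \<exists>i<Nc. k i \<noteq> 0 \<and> V i n \<noteq> PI}"

end

theory Submission
  imports Defs
begin

text \<open>Suppose the couplings activated in kA act only on a set Q of qubits and those activated
  in kB only outside Q. Switching on only these couplings, the Hamiltonian splits into a part
  acting on Q and a part acting on its complement. For small couplings the gap 2 min h of the
  unperturbed Hamiltonian persists, so a normalized eigenvector with positive vacuum amplitude
  and energy below the gap is unique. The expanded ground states have vacuum amplitude close
  to 1, hence energy below the gap, and the tensor product of the two partial ground states is
  again such a vector; so it is the ground state of the combined couplings. Expanding both sides
  in J and comparing coefficients of the multivariate power series gives
  C (kA + kB) = C kA * C kB. If kA and kB activate a common coupling, that coupling must be
  the identity; it only shifts the energy, so every coefficient involving it vanishes.\<close>

section \<open>Multivariate power series\<close>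

lemma powser_coeff_eq_0_if_sums_0:
  fixes a :: "nat \<Rightarrow> real"
  assumes e: "e > 0" and sums_0: "\<And>y. \<bar>y\<bar> < e \<Longrightarrow> (\<lambda>m. a m * y ^ m) sums 0"
  shows "a n = 0"
proof (induction n rule: less_induct)
  case (less n)
  have "(\<lambda>m. a (m + n) * y ^ m) sums 0" if "y \<noteq> 0" "norm y < e" for y :: real
  proof -
    have "(\<lambda>m. a (m + n) * y ^ (m + n)) sums (0 - (\<Sum>i<n. a i * y ^ i))"
      using sums_split_initial_segment[OF sums_0, of y n] that by simp
    then have "(\<lambda>m. a (m + n) * y ^ (m + n) / y ^ n) sums (0 / y ^ n)"
      using less by (intro sums_divide) simp
    then show ?thesis
      using that by (simp add: power_add)
  qed
  then have "((\<lambda>_. 0) \<longlongrightarrow> a (0 + n)) (at (0::real))"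
    by (intro powser_limit_0_strong[OF e]) auto
  then show ?case
    by (simp add: tendsto_const_iff)
qed

lemma has_sum_powser_coeff_eq_0:
  fixes a :: "nat \<Rightarrow> complex"
  assumes e: "e > 0"
    and has_sum_0: "\<And>y::real. \<bar>y\<bar> < e \<Longrightarrow> ((\<lambda>m. complex_of_real (y ^ m) * a m) has_sum 0) UNIV"
  shows "a n = 0"
proof -
  have "Re (a n) = 0"
  proof (rule powser_coeff_eq_0_if_sums_0[OF e])
    fix y :: real assume "\<bar>y\<bar> < e"
    from has_sum_Re[OF has_sum_0[OF this]] show "(\<lambda>m. Re (a m) * y ^ m) sums 0"
      by (intro has_sum_imp_sums) (simp add: mult.commute)
  qed
  moreover have "Im (a n) = 0"
  proof (rule powser_coeff_eq_0_if_sums_0[OF e])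
    fix y :: real assume "\<bar>y\<bar> < e"
    from has_sum_Im[OF has_sum_0[OF this]] show "(\<lambda>m. Im (a m) * y ^ m) sums 0"
      by (intro has_sum_imp_sums) (simp add: mult.commute)
  qed
  ultimately show ?thesis
    by (simp add: complex_eq_iff)
qed

lemma multi_idx_0: "multi_idx 0 = {\<lambda>_. 0}"
  unfolding multi_idx_def by auto

lemma has_sum_multi_idx_Suc:
  "(f has_sum s) (multi_idx (Suc n)) \<longleftrightarrow>
     ((\<lambda>(m, k). f (k(n := m))) has_sum s) (UNIV \<times> multi_idx n)"
  by (rule has_sum_reindex_bij_witness[where i="\<lambda>k. (k n, k(n := 0))" and j="\<lambda>(m, k). k(n := m)",
        symmetric]) (auto simp: multi_idx_def fun_eq_iff)

lemma mono_pow_fun_upd_idx: "mono_pow (Suc n) J (k(n := m)) = mono_pow n J k * J n ^ m"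
  unfolding mono_pow_def by (simp add: prod.lessThan_Suc)

lemma mono_pow_fun_upd: "mono_pow n (J(n := y)) k = mono_pow n J k"
  unfolding mono_pow_def by (intro prod.cong) auto

lemma has_sum_Times_powser_0D:
  fixes g :: "nat \<Rightarrow> 'a \<Rightarrow> complex"
  assumes e: "e > 0"
    and double: "\<And>y. \<bar>y\<bar> < e \<Longrightarrow> ((\<lambda>(m, k). complex_of_real (y ^ m) * g m k) has_sum 0) (UNIV \<times> T)"
  shows "(g m has_sum 0) T"
proof -
  have summable: "(\<lambda>k. complex_of_real (y ^ m) * g m k) summable_on T" if "\<bar>y\<bar> < e" for y m
    using summable_on_SigmaD1[OF has_sum_imp_summable[OF double[OF that]]] by simp
  have "(\<Sum>\<^sub>\<infinity>k\<in>T. g m k) = 0"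
  proof (rule has_sum_powser_coeff_eq_0[OF e])
    fix y :: real
    assume y: "\<bar>y\<bar> < e"
    have "((\<lambda>m. \<Sum>\<^sub>\<infinity>k\<in>T. complex_of_real (y ^ m) * g m k) has_sum 0) UNIV"
      using has_sum_Sigma'[OF double[OF y]] summable[OF y] by (auto simp: has_sum_infsum)
    then show "((\<lambda>m. complex_of_real (y ^ m) * (\<Sum>\<^sub>\<infinity>k\<in>T. g m k)) has_sum 0) UNIV"
      unfolding infsum_cmult_right' .
  qed
  moreover have "g m summable_on T"
  proof -
    have "\<bar>e / 2\<bar> < e"
      using e by simp
    moreover have "complex_of_real ((e / 2) ^ m) \<noteq> 0"
      using e by simp
    ultimately show ?thesis
      using summable summable_on_cmult_right' by blast
  qed
  ultimately show ?thesis
    using has_sum_infsum by fastforce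
qed

text \<open>Induction on the number of variables: splitting off the last variable turns the
  series into a power series in one variable whose coefficients are series in the others.\<close>

lemma mono_pow_has_sum_0_imp_coeff_0:
  fixes a :: "(nat \<Rightarrow> nat) \<Rightarrow> complex"
  assumes e: "e > 0"
    and "\<forall>J. (\<forall>i<n. \<bar>J i\<bar> < e) \<longrightarrow>
           ((\<lambda>k. complex_of_real (mono_pow n J k) * a k) has_sum 0) (multi_idx n)"
    and "k \<in> multi_idx n"
  shows "a k = 0"
  using assms(2,3)
proof (induction n arbitrary: a k)
  case 0
  then have "((\<lambda>k. complex_of_real (mono_pow 0 (\<lambda>_. 0) k) * a k) has_sum 0) {\<lambda>_. 0}"
    using e by (simp add: multi_idx_0)
  then show ?case
    using 0(2) by (simp add: multi_idx_0 mono_pow_def has_sum_finite_iff)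
next
  case (Suc n)
  let ?T = "multi_idx n"
  have "((\<lambda>k. complex_of_real (mono_pow n J k) * a (k(n := m))) has_sum 0) ?T"
    if J: "\<forall>i<n. \<bar>J i\<bar> < e" for J m
  proof (rule has_sum_Times_powser_0D[OF e])
    fix y :: real
    assume "\<bar>y\<bar> < e"
    with J have "\<forall>i<Suc n. \<bar>(J(n := y)) i\<bar> < e"
      by (auto simp: less_Suc_eq)
    with Suc.prems(1) have "((\<lambda>k. complex_of_real (mono_pow (Suc n) (J(n := y)) k) * a k)
                                 has_sum 0) (multi_idx (Suc n))"
      by blast
    then show "((\<lambda>(m, k). complex_of_real (y ^ m) * (complex_of_real (mono_pow n J k) * a (k(n := m))))
                 has_sum 0) (UNIV \<times> ?T)"
      unfolding has_sum_multi_idx_Suc by (simp add: mono_pow_fun_upd_idx mono_pow_fun_upd mult_ac)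
  qed
  moreover have "k(n := 0) \<in> ?T"
    using Suc.prems(2) by (auto simp: multi_idx_def)
  ultimately have "a ((k(n := 0))(n := k n)) = 0"
    by (intro Suc.IH[where a="\<lambda>k'. a (k'(n := k n))"]) blast+
  then show ?case
    by simp
qed

lemma mono_pow_series_coeffs_unique:
  fixes a b :: "(nat \<Rightarrow> nat) \<Rightarrow> complex"
  assumes e: "e > 0"
    and "\<forall>J. (\<forall>i<n. \<bar>J i\<bar> < e) \<longrightarrow>
           ((\<lambda>k. complex_of_real (mono_pow n J k) * a k) has_sum s J) (multi_idx n) \<and>
           ((\<lambda>k. complex_of_real (mono_pow n J k) * b k) has_sum s J) (multi_idx n)"
    and "k \<in> multi_idx n"
  shows "a k = b k"
proof -
  have "a k - b k = 0"
  proof (rule mono_pow_has_sum_0_imp_coeff_0[OF e _ assms(3)], intro allI impI)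
    fix J :: "nat \<Rightarrow> real" assume "\<forall>i<n. \<bar>J i\<bar> < e"
    with assms(2) have "((\<lambda>k. complex_of_real (mono_pow n J k) * a k
                          + - (complex_of_real (mono_pow n J k) * b k)) has_sum (s J + - s J)) (multi_idx n)"
      by (intro has_sum_add has_sum_uminusI) auto
    then show "((\<lambda>k. complex_of_real (mono_pow n J k) * (a k - b k)) has_sum 0) (multi_idx n)"
      by (simp add: right_diff_distrib)
  qed
  then show ?thesis
    by simp
qed

definition zero_outside :: "nat set \<Rightarrow> (nat \<Rightarrow> 'a::zero) \<Rightarrow> nat \<Rightarrow> 'a" where
  "zero_outside S f = (\<lambda>i. if i \<in> S then f i else 0)"

lemma abs_zero_outside_le: "\<bar>zero_outside S J i\<bar> \<le> \<bar>J i :: real\<bar>"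
  unfolding zero_outside_def by simp

lemma abs_zero_outside_less: "\<forall>i<n. \<bar>J i\<bar> < r \<Longrightarrow> \<forall>i<n. \<bar>zero_outside S J i\<bar> < (r :: real)"
  using abs_zero_outside_le order_le_less_trans by blast

lemma zero_outside_in_multi_idx: "k \<in> multi_idx Nc \<Longrightarrow> zero_outside S k \<in> multi_idx Nc"
  unfolding multi_idx_def zero_outside_def by auto

lemma zero_in_multi_idx: "(\<lambda>_. 0) \<in> multi_idx Nc"
  unfolding multi_idx_def by simp

lemma add_in_multi_idx: "a \<in> multi_idx Nc \<Longrightarrow> b \<in> multi_idx Nc \<Longrightarrow> (\<lambda>i. a i + b i) \<in> multi_idx Nc"
  unfolding multi_idx_def by auto

lemma multi_idx_nonzero_entry: "k \<in> multi_idx Nc \<Longrightarrow> k i \<noteq> 0 \<Longrightarrow> i < Nc"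
  by (cases "i < Nc") (auto simp: multi_idx_def)

lemma zero_outside_add:
  fixes a b :: "nat \<Rightarrow> nat"
  assumes "SA \<inter> SB = {}" "{i. a i \<noteq> 0} \<subseteq> SA" "{i. b i \<noteq> 0} \<subseteq> SB"
  shows "zero_outside SA (\<lambda>i. a i + b i) = a" "zero_outside SB (\<lambda>i. a i + b i) = b"
  using assms unfolding zero_outside_def by (auto simp: fun_eq_iff)

lemma zero_outside_split:
  fixes k :: "nat \<Rightarrow> nat"
  assumes "SA \<inter> SB = {}" "{i. k i \<noteq> 0} \<subseteq> SA \<union> SB"
  shows "(\<lambda>i. zero_outside SA k i + zero_outside SB k i) = k"
  using assms unfolding zero_outside_def by (auto simp: fun_eq_iff)

lemma zero_outside_Un:
  fixes J :: "nat \<Rightarrow> 'a::monoid_add"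
  shows "SA \<inter> SB = {} \<Longrightarrow> zero_outside (SA \<union> SB) J = (\<lambda>i. zero_outside SA J i + zero_outside SB J i)"
  unfolding zero_outside_def by (auto simp: fun_eq_iff)

lemma sum_abs_zero_outside_Un:
  fixes J :: "nat \<Rightarrow> real"
  assumes "SA \<inter> SB = {}"
  shows "(\<Sum>i<n. \<bar>zero_outside (SA \<union> SB) J i\<bar>) =
           (\<Sum>i<n. \<bar>zero_outside SA J i\<bar>) + (\<Sum>i<n. \<bar>zero_outside SB J i\<bar>)"
proof -
  have "\<bar>zero_outside (SA \<union> SB) J i\<bar> = \<bar>zero_outside SA J i\<bar> + \<bar>zero_outside SB J i\<bar>" for i
    using assms by (auto simp: zero_outside_def)
  then show ?thesis
    by (simp add: sum.distrib)
qed

lemma three_sum_abs_less: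
  fixes J :: "nat \<Rightarrow> real"
  assumes "gap > 0" and "\<forall>i<n. \<bar>J i\<bar> \<le> gap / (3 * (real n + 1))"
  shows "3 * (\<Sum>i<n. \<bar>J i\<bar>) < gap"
proof -
  have "(\<Sum>i<n. \<bar>J i\<bar>) \<le> real n * (gap / (3 * (real n + 1)))"
    using assms(2) sum_mono[of "{..<n}" "\<lambda>i. \<bar>J i\<bar>" "\<lambda>_. gap / (3 * (real n + 1))"] by simp
  also have "\<dots> < gap / 3"
    using assms(1) by (simp add: field_simps)
  finally show ?thesis
    by simp
qed

lemma mono_pow_zero_outside:
  assumes "k \<in> multi_idx Nc"
  shows "mono_pow Nc (zero_outside S J) k = (if {i. k i \<noteq> 0} \<subseteq> S then mono_pow Nc J k else 0)"
proof (cases "{i. k i \<noteq> 0} \<subseteq> S")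
  case True
  then have "k i = 0" if "i \<notin> S" for i
    using that by auto
  with True show ?thesis
    unfolding mono_pow_def zero_outside_def by (auto intro!: prod.cong)
next
  case False
  then obtain i where "k i \<noteq> 0" "i \<notin> S"
    by auto
  moreover have "i < Nc"
    using multi_idx_nonzero_entry[OF assms \<open>k i \<noteq> 0\<close>] .
  ultimately show ?thesis
    unfolding mono_pow_def zero_outside_def using False by (auto intro!: prod_zero bexI[of _ i])
qed

lemma mono_pow_add_idx: "mono_pow Nc J (\<lambda>i. a i + b i) = mono_pow Nc J a * mono_pow Nc J b"
  unfolding mono_pow_def by (simp add: power_add prod.distrib)

lemma mono_pow_zero_idx [simp]: "mono_pow Nc J (\<lambda>_. 0) = 1"
  unfolding mono_pow_def by simp

lemma op_pow_zero_idx [simp]: "op_pow V (\<lambda>_. 0) m v = v"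
  by (induction m) auto

lemma abs_mono_pow_le:
  assumes J: "\<forall>i<Nc. \<bar>J i\<bar> \<le> \<rho> * a" and \<rho>: "0 \<le> \<rho>" "\<rho> \<le> 1" and a: "a \<ge> 0"
    and k: "k \<in> multi_idx Nc" "k \<noteq> (\<lambda>_. 0)"
  shows "\<bar>mono_pow Nc J k\<bar> \<le> \<rho> * mono_pow Nc (\<lambda>_. a) k"
proof -
  obtain i where i: "k i \<noteq> 0"
    using k(2) by auto
  then have "i < Nc"
    by (rule multi_idx_nonzero_entry[OF k(1)])
  then have "1 \<le> (\<Sum>i<Nc. k i)"
    using i member_le_sum[of i "{..<Nc}" k] by simp
  have "\<bar>mono_pow Nc J k\<bar> = (\<Prod>i<Nc. \<bar>J i\<bar> ^ k i)"
    unfolding mono_pow_def by (simp add: abs_prod power_abs)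
  also have "\<dots> \<le> (\<Prod>i<Nc. (\<rho> * a) ^ k i)"
    using J by (intro prod_mono) (auto intro: power_mono)
  also have "\<dots> = \<rho> ^ (\<Sum>i<Nc. k i) * mono_pow Nc (\<lambda>_. a) k"
    unfolding mono_pow_def power_sum by (simp add: power_mult_distrib prod.distrib)
  also have "\<dots> \<le> \<rho> * mono_pow Nc (\<lambda>_. a) k"
    using \<rho> a \<open>1 \<le> (\<Sum>i<Nc. k i)\<close>
    by (intro mult_right_mono) (auto simp: mono_pow_def intro: power_decreasing[of 1, simplified] prod_nonneg)
  finally show ?thesis .
qed

lemma has_sum_mult_Times:
  fixes f g :: "'a \<Rightarrow> complex"
  assumes f: "(f has_sum s) A" and g: "(g has_sum t) B"
  shows "((\<lambda>p. f (fst p) * g (snd p)) has_sum (s * t)) (A \<times> B)"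
proof -
  have f_abs: "(\<lambda>x. norm (f x)) summable_on A" and g_abs: "(\<lambda>y. norm (g y)) summable_on B"
    using f g summable_on_iff_abs_summable_on_complex has_sum_imp_summable by blast+
  have "(\<lambda>p. norm (f (fst p) * g (snd p))) summable_on A \<times> B"
  proof (subst Infinite_Sum.abs_summable_on_Sigma_iff, intro conjI ballI)
    show "(\<lambda>y. norm (f (fst (x, y)) * g (snd (x, y)))) summable_on B" for x
      using g_abs by (simp add: norm_mult summable_on_cmult_right)
    have "(\<lambda>x. norm (f x) * (\<Sum>\<^sub>\<infinity>y\<in>B. norm (g y))) summable_on A"
      using f_abs by (rule summable_on_cmult_left)
    then show "(\<lambda>x. norm (\<Sum>\<^sub>\<infinity>y\<in>B. norm (f (fst (x, y)) * g (snd (x, y))))) summable_on A"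
      by (simp add: norm_mult infsum_cmult_right' infsum_nonneg)
  qed
  then have "(\<lambda>p. f (fst p) * g (snd p)) summable_on A \<times> B"
    by (rule abs_summable_summable)
  then show ?thesis
    using f g by (intro has_sum_SigmaI) (auto intro: has_sum_cmult_left has_sum_cmult_right)
qed

lemma has_sum_mono_pow_disjoint_mult:
  fixes a b :: "(nat \<Rightarrow> nat) \<Rightarrow> complex"
  assumes disjoint: "SA \<inter> SB = {}"
    and A: "((\<lambda>k. complex_of_real (mono_pow Nc (zero_outside SA J) k) * a k) has_sum s) (multi_idx Nc)"
    and B: "((\<lambda>k. complex_of_real (mono_pow Nc (zero_outside SB J) k) * b k) has_sum t) (multi_idx Nc)"
  shows "((\<lambda>k. complex_of_real (mono_pow Nc (zero_outside (SA \<union> SB) J) k) *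
                (a (zero_outside SA k) * b (zero_outside SB k))) has_sum (s * t)) (multi_idx Nc)"
proof -
  let ?MI = "multi_idx Nc"
  let ?D = "{(p, q) \<in> ?MI \<times> ?MI. {i. p i \<noteq> 0} \<subseteq> SA \<and> {i. q i \<noteq> 0} \<subseteq> SB}"
  let ?T = "{k \<in> ?MI. {i. k i \<noteq> 0} \<subseteq> SA \<union> SB}"
  let ?f = "\<lambda>p. complex_of_real (mono_pow Nc (zero_outside SA J) (fst p)) * a (fst p) *
                (complex_of_real (mono_pow Nc (zero_outside SB J) (snd p)) * b (snd p))"
  let ?g = "\<lambda>k. complex_of_real (mono_pow Nc (zero_outside (SA \<union> SB) J) k) *
                (a (zero_outside SA k) * b (zero_outside SB k))"
  have "(?f has_sum (s * t)) (?MI \<times> ?MI)"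
    by (rule has_sum_mult_Times[OF A B])
  then have "(?f has_sum (s * t)) ?D"
    by (rule has_sum_cong_neutral[THEN iffD1, rotated -1])
      (auto simp: mono_pow_zero_outside split: if_splits)
  moreover have "(?f has_sum (s * t)) ?D \<longleftrightarrow> (?g has_sum (s * t)) ?T"
  proof (rule has_sum_reindex_bij_witness[where i="\<lambda>k. (zero_outside SA k, zero_outside SB k)"
        and j="\<lambda>(p, q) i. p i + q i"])
    fix k
    assume "k \<in> ?T"
    then show "(\<lambda>(p, q) i. p i + q i) (zero_outside SA k, zero_outside SB k) = k"
      and "(zero_outside SA k, zero_outside SB k) \<in> ?D"
      using zero_outside_split[OF disjoint] zero_outside_in_multi_idx
      by (auto simp: zero_outside_def)
  next
    fix pq
    assume "pq \<in> ?D"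
    then obtain p q where pq: "pq = (p, q)" and p: "p \<in> ?MI" "{i. p i \<noteq> 0} \<subseteq> SA"
      and q: "q \<in> ?MI" "{i. q i \<noteq> 0} \<subseteq> SB"
      by blast
    note split = zero_outside_add[OF disjoint p(2) q(2)]
    have sum_in: "(\<lambda>i. p i + q i) \<in> ?MI"
      by (rule add_in_multi_idx[OF p(1) q(1)])
    show "(zero_outside SA ((\<lambda>(p, q) i. p i + q i) pq), zero_outside SB ((\<lambda>(p, q) i. p i + q i) pq)) = pq"
      using split by (simp add: pq)
    show "(\<lambda>(p, q) i. p i + q i) pq \<in> ?T"
      using sum_in p q by (auto simp: pq)
    show "?g ((\<lambda>(p, q) i. p i + q i) pq) = ?f pq"
      using p q sum_in
      by (auto simp: pq split mono_pow_zero_outside mono_pow_add_idx)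
  qed simp
  ultimately have "(?g has_sum (s * t)) ?T"
    by blast
  then show ?thesis
    by (rule has_sum_cong_neutral[THEN iffD1, rotated -1]) (auto simp: mono_pow_zero_outside)
qed

lemma has_sum_mono_pow_zero_outside_iff:
  "((\<lambda>k. complex_of_real (mono_pow Nc (zero_outside S J) k) * c k) has_sum s) (multi_idx Nc) \<longleftrightarrow>
   ((\<lambda>k. complex_of_real (mono_pow Nc J k) * (if {i. k i \<noteq> 0} \<subseteq> S then c k else 0))
      has_sum s) (multi_idx Nc)"
  by (intro has_sum_cong) (auto simp: mono_pow_zero_outside)

lemma norm_mono_pow_series_diff_const_le:
  fixes c :: "(nat \<Rightarrow> nat) \<Rightarrow> complex"
  assumes \<rho>: "0 \<le> \<rho>" "\<rho> \<le> 1" and a: "a \<ge> 0" and J: "\<forall>i<n. \<bar>J i\<bar> \<le> \<rho> * a"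
    and s: "((\<lambda>k. complex_of_real (mono_pow n J k) * c k) has_sum s) (multi_idx n)"
    and M: "((\<lambda>k. norm (complex_of_real (mono_pow n (\<lambda>_. a) k) * c k)) has_sum M) (multi_idx n)"
  shows "norm (s - c (\<lambda>_. 0)) \<le> \<rho> * M"
proof -
  define g where "g k = (if k = (\<lambda>_. 0) then 0 else complex_of_real (mono_pow n J k) * c k)" for k
  have "((\<lambda>k. if k = (\<lambda>_. 0) then complex_of_real (mono_pow n J k) * c k else 0) has_sum c (\<lambda>_. 0))
          (multi_idx n)"
    by (rule has_sum_finite_neutralI[where B="{\<lambda>_. 0}"]) (auto simp: zero_in_multi_idx)
  from has_sum_add[OF s has_sum_uminusI[OF this]]
  have "((\<lambda>k. complex_of_real (mono_pow n J k) * c k +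
           - (if k = (\<lambda>_. 0) then complex_of_real (mono_pow n J k) * c k else 0))
         has_sum (s + - c (\<lambda>_. 0))) (multi_idx n)" .
  moreover have "(\<lambda>k. complex_of_real (mono_pow n J k) * c k +
           - (if k = (\<lambda>_. 0) then complex_of_real (mono_pow n J k) * c k else 0)) = g"
    by (auto simp: g_def fun_eq_iff)
  ultimately have "(g has_sum (s - c (\<lambda>_. 0))) (multi_idx n)"
    by simp
  moreover have "((\<lambda>k. \<rho> * norm (complex_of_real (mono_pow n (\<lambda>_. a) k) * c k)) has_sum (\<rho> * M))
                   (multi_idx n)"
    using M by (rule has_sum_cmult_right)
  moreover have "norm (g k) \<le> \<rho> * norm (complex_of_real (mono_pow n (\<lambda>_. a) k) * c k)"
    if k: "k \<in> multi_idx n" for k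
  proof (cases "k = (\<lambda>_. 0)")
    case False
    have "\<bar>mono_pow n J k\<bar> \<le> \<rho> * mono_pow n (\<lambda>_. a) k"
      using J a \<rho> k False by (intro abs_mono_pow_le) auto
    then have "\<bar>mono_pow n J k\<bar> * cmod (c k) \<le> \<rho> * mono_pow n (\<lambda>_. a) k * cmod (c k)"
      by (intro mult_right_mono) simp_all
    moreover have "mono_pow n (\<lambda>_. a) k \<ge> 0"
      unfolding mono_pow_def using a by (auto intro: prod_nonneg)
    ultimately show ?thesis
      using False by (simp add: g_def norm_mult mult.assoc)
  qed (use \<rho> in \<open>simp add: g_def\<close>)
  ultimately show ?thesis
    by (rule norm_infsum_le)
qed

lemma mono_pow_series_near_constant_term:
  fixes c :: "(nat \<Rightarrow> nat) \<Rightarrow> complex"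
  assumes a: "a > 0" and \<delta>: "\<delta> > 0"
    and summable: "(\<lambda>k. complex_of_real (mono_pow n (\<lambda>_. a) k) * c k) summable_on multi_idx n"
  shows "\<exists>r>0. r \<le> a \<and> (\<forall>J s. (\<forall>i<n. \<bar>J i\<bar> < r) \<longrightarrow>
           ((\<lambda>k. complex_of_real (mono_pow n J k) * c k) has_sum s) (multi_idx n) \<longrightarrow>
           norm (s - c (\<lambda>_. 0)) \<le> \<delta>)"
proof -
  define M where "M = (\<Sum>\<^sub>\<infinity>k\<in>multi_idx n. norm (complex_of_real (mono_pow n (\<lambda>_. a) k) * c k))"
  have M: "((\<lambda>k. norm (complex_of_real (mono_pow n (\<lambda>_. a) k) * c k)) has_sum M) (multi_idx n)"
    unfolding M_def using summable_on_iff_abs_summable_on_complex[THEN iffD1, OF summable] by simp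
  have "M \<ge> 0"
    unfolding M_def by (rule infsum_nonneg) simp
  define \<rho> where "\<rho> = min 1 (\<delta> / (M + 1))"
  have \<rho>: "0 < \<rho>" "\<rho> \<le> 1"
    using \<delta> \<open>M \<ge> 0\<close> unfolding \<rho>_def by auto
  have "\<rho> * M \<le> \<delta> / (M + 1) * M"
    using \<open>M \<ge> 0\<close> unfolding \<rho>_def by (intro mult_right_mono) auto
  also have "\<dots> \<le> \<delta>"
    using \<delta> \<open>M \<ge> 0\<close> by (simp add: field_simps)
  finally have "\<rho> * M \<le> \<delta>" .
  moreover have "norm (s - c (\<lambda>_. 0)) \<le> \<rho> * M"
    if "\<forall>i<n. \<bar>J i\<bar> < \<rho> * a" "((\<lambda>k. complex_of_real (mono_pow n J k) * c k) has_sum s) (multi_idx n)"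
    for J s
    using \<rho> a that M by (intro norm_mono_pow_series_diff_const_le) (auto intro: less_imp_le)
  moreover have "\<rho> * a \<le> a"
    using \<rho> a by simp
  ultimately show ?thesis
    using \<rho> a by (intro exI[of _ "\<rho> * a"]) force
qed

section \<open>Pauli strings and the Hamiltonian\<close>

lemma apply_pauli_sym_diff:
  "apply_pauli P v = (\<lambda>y. string_phase P (sym_diff y (flips P)) * v (sym_diff y (flips P)))"
proof -
  have "y \<union> F - (y \<inter> F) = sym_diff y F" for y F :: "nat set"
    by blast
  then show ?thesis
    unfolding apply_pauli_def by simp
qed

lemma flips_subset: "flips P \<subseteq> {n. P n \<noteq> PI}"
  unfolding flips_def by auto

lemma is_pauli_string_non_identity: "is_pauli_string Nq P \<Longrightarrow> {n. P n \<noteq> PI} \<subseteq> {..<Nq}"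
  unfolding is_pauli_string_def by (auto simp: not_less[symmetric])

lemma is_pauli_string_flips: "is_pauli_string Nq P \<Longrightarrow> flips P \<subseteq> {..<Nq}"
  using is_pauli_string_non_identity flips_subset by blast

lemma norm_pauli_phase [simp]: "cmod (pauli_phase p b) = 1"
  by (cases p) auto

lemma norm_string_phase [simp]: "cmod (string_phase P x) = 1"
  unfolding string_phase_def by (simp add: prod_norm[symmetric])

lemma string_phase_cong:
  assumes "\<And>n. P n \<noteq> PI \<Longrightarrow> n \<in> x \<longleftrightarrow> n \<in> y"
  shows "string_phase P x = string_phase P y"
  unfolding string_phase_def using assms by (intro prod.cong) auto

lemma cnj_pauli_phase:
  "cnj (pauli_phase p b) = pauli_phase p (if p = PX \<or> p = PY then \<not> b else b)"
  by (cases p; cases b) auto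

lemma cnj_string_phase: "cnj (string_phase P x) = string_phase P (sym_diff x (flips P))"
  unfolding string_phase_def cnj_prod cnj_pauli_phase
  by (intro prod.cong refl) (auto simp: flips_def)

lemma apply_pauli_basis_state:
  "apply_pauli P (\<lambda>x. if x = A then c else 0) =
     (\<lambda>x. if x = sym_diff A (flips P) then c * string_phase P A else 0)"
  unfolding apply_pauli_sym_diff by (auto simp: fun_eq_iff)

lemma funpow_apply_pauli_basis_state:
  "\<exists>c'. cmod c' = cmod c \<and>
     (apply_pauli P ^^ j) (\<lambda>x. if x = A then c else 0) =
       (\<lambda>x. if x = (if even j then A else sym_diff A (flips P)) then c' else 0)"
proof (induction j)
  case 0
  then show ?case
    by auto
next
  case (Suc j)
  then obtain c' where "cmod c' = cmod c"
    and "(apply_pauli P ^^ j) (\<lambda>x. if x = A then c else 0) =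
           (\<lambda>x. if x = (if even j then A else sym_diff A (flips P)) then c' else 0)"
    by blast
  moreover have "sym_diff (sym_diff A F) F = A" for F :: "nat set"
    by blast
  ultimately show ?case
    by (intro exI[of _ "c' * string_phase P (if even j then A else sym_diff A (flips P))"])
       (auto simp: apply_pauli_basis_state norm_mult)
qed

lemma op_pow_ket0:
  "\<exists>c F. cmod c = 1 \<and> F \<subseteq> (\<Union>i\<in>{i. i < m \<and> k i \<noteq> 0}. flips (V i)) \<and>
     op_pow V k m ket0 = (\<lambda>x. if x = F then c else 0)"
proof (induction m)
  case 0
  then show ?case
    by (auto simp: ket0_def fun_eq_iff intro!: exI[of _ 1])
next
  case (Suc m)
  then obtain c F where c: "cmod c = 1" and F: "F \<subseteq> (\<Union>i\<in>{i. i < m \<and> k i \<noteq> 0}. flips (V i))"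
    and op: "op_pow V k m ket0 = (\<lambda>x. if x = F then c else 0)"
    by blast
  obtain c' where c': "cmod c' = cmod c"
    and pow: "(apply_pauli (V m) ^^ k m) (\<lambda>x. if x = F then c else 0) =
      (\<lambda>x. if x = (if even (k m) then F else sym_diff F (flips (V m))) then c' else 0)"
    using funpow_apply_pauli_basis_state by blast
  let ?U = "\<Union>i\<in>{i. i < Suc m \<and> k i \<noteq> 0}. flips (V i)"
  have "F \<subseteq> ?U"
    using F by (auto simp: less_Suc_eq)
  moreover have "odd (k m) \<Longrightarrow> flips (V m) \<subseteq> ?U"
    by (intro UN_upper) (auto simp: odd_pos)
  ultimately have "(if even (k m) then F else sym_diff F (flips (V m))) \<subseteq> ?U"
    by auto
  then show ?case
    using c c' by (intro exI[of _ c'] exI[of _ "if even (k m) then F else sym_diff F (flips (V m))"])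
      (simp add: op pow)
qed

definition state_inner :: "nat \<Rightarrow> state \<Rightarrow> state \<Rightarrow> complex" where
  "state_inner Nq u v = (\<Sum>x\<in>Pow {..<Nq}. cnj (u x) * v x)"

lemma state_inner_self: "state_inner Nq u u = complex_of_real (sq_norm Nq u)"
  unfolding state_inner_def sq_norm_def
  by (simp add: complex_norm_square mult.commute del: of_real_power)

lemma state_inner_commute: "state_inner Nq v u = cnj (state_inner Nq u v)"
  unfolding state_inner_def by (simp add: mult.commute)

lemma state_inner_diff_right:
  "state_inner Nq u (\<lambda>x. a * f x - b * g x) = a * state_inner Nq u f - b * state_inner Nq u g"
  unfolding state_inner_def right_diff_distrib sum_subtractf sum_distrib_left
  by (simp add: mult.left_commute)

lemma state_inner_diff_left:
  "state_inner Nq (\<lambda>x. a * f x - b * g x) u = cnj a * state_inner Nq f u - cnj b * state_inner Nq g u"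
  unfolding state_inner_def complex_cnj_diff complex_cnj_mult left_diff_distrib sum_subtractf
    sum_distrib_left
  by (simp add: mult.assoc)

lemma sq_norm_nonneg: "sq_norm Nq u \<ge> 0"
  unfolding sq_norm_def by (auto intro: sum_nonneg)

lemma sq_norm_mult: "sq_norm Nq (\<lambda>x. a * u x) = (cmod a)\<^sup>2 * sq_norm Nq u"
  unfolding sq_norm_def by (simp add: norm_mult power_mult_distrib sum_distrib_left)

lemma sq_norm_ket0: "sq_norm Nq ket0 = 1"
proof -
  have "sq_norm Nq ket0 = (\<Sum>x\<in>{{}}. (cmod (ket0 x))\<^sup>2)"
    unfolding sq_norm_def by (rule sum.mono_neutral_right) (auto simp: ket0_def)
  then show ?thesis
    by (simp add: ket0_def)
qed

lemma sq_norm_eq_0_imp_zero: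
  assumes "u \<in> qstates Nq" "sq_norm Nq u = 0"
  shows "u = (\<lambda>_. 0)"
proof
  fix x
  show "u x = 0"
  proof (cases "x \<subseteq> {..<Nq}")
    case True
    have "\<forall>y\<in>Pow {..<Nq}. (cmod (u y))\<^sup>2 = 0"
      using assms(2) unfolding sq_norm_def by (subst (asm) sum_nonneg_eq_0_iff) auto
    then show ?thesis
      using True by auto
  next
    case False
    then show ?thesis
      using assms(1) unfolding qstates_def by auto
  qed
qed

lemma sum_Pow_sym_diff:
  assumes "F \<subseteq> {..<Nq}"
  shows "(\<Sum>x\<in>Pow {..<Nq}. g (sym_diff x F)) = (\<Sum>x\<in>Pow {..<Nq}. g x)"
  by (rule sum.reindex_bij_witness[where i="\<lambda>x. sym_diff x F" and j="\<lambda>x. sym_diff x F"])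
    (use assms in auto)

lemma sq_norm_apply_pauli:
  assumes "is_pauli_string Nq P"
  shows "sq_norm Nq (apply_pauli P v) = sq_norm Nq v"
  unfolding sq_norm_def apply_pauli_sym_diff norm_mult norm_string_phase mult_1
  by (rule sum_Pow_sym_diff[OF is_pauli_string_flips[OF assms]])

lemma state_inner_apply_pauli:
  assumes "is_pauli_string Nq P"
  shows "state_inner Nq (apply_pauli P u) v = state_inner Nq u (apply_pauli P v)"
proof -
  let ?F = "flips P"
  have "sym_diff (sym_diff x ?F) ?F = x" for x
    by blast
  then have "state_inner Nq (apply_pauli P u) v =
      (\<Sum>x\<in>Pow {..<Nq}. (\<lambda>y. cnj (string_phase P y * u y) * v (sym_diff y ?F)) (sym_diff x ?F))"
    unfolding state_inner_def apply_pauli_sym_diff by simp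
  also have "\<dots> = (\<Sum>x\<in>Pow {..<Nq}. cnj (string_phase P x * u x) * v (sym_diff x ?F))"
    by (rule sum_Pow_sym_diff[OF is_pauli_string_flips[OF assms]])
  also have "\<dots> = state_inner Nq u (apply_pauli P v)"
    unfolding state_inner_def apply_pauli_sym_diff by (intro sum.cong refl) (simp add: cnj_string_phase)
  finally show ?thesis .
qed

lemma norm_state_inner_apply_pauli_le:
  assumes "is_pauli_string Nq P"
  shows "cmod (state_inner Nq u (apply_pauli P u)) \<le> sq_norm Nq u"
proof -
  have "cmod (state_inner Nq u (apply_pauli P u)) \<le>
      (\<Sum>x\<in>Pow {..<Nq}. cmod (u x) * cmod (apply_pauli P u x))"
    unfolding state_inner_def by (rule order_trans[OF norm_sum]) (simp add: norm_mult)
  also have "\<dots> \<le> (\<Sum>x\<in>Pow {..<Nq}. ((cmod (u x))\<^sup>2 + (cmod (apply_pauli P u x))\<^sup>2) / 2)"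
  proof (rule sum_mono)
    fix x
    show "cmod (u x) * cmod (apply_pauli P u x) \<le> ((cmod (u x))\<^sup>2 + (cmod (apply_pauli P u x))\<^sup>2) / 2"
      using sum_squares_bound[of "cmod (u x)" "cmod (apply_pauli P u x)"] by simp
  qed
  also have "\<dots> = (sq_norm Nq u + sq_norm Nq (apply_pauli P u)) / 2"
    unfolding sq_norm_def by (simp add: sum.distrib flip: sum_divide_distrib)
  also have "\<dots> = sq_norm Nq u"
    using sq_norm_apply_pauli[OF assms] by simp
  finally show ?thesis .
qed

lemma flips_Zop [simp]: "flips (Zop n) = {}"
  unfolding flips_def Zop_def by auto

lemma apply_pauli_Zop: "apply_pauli (Zop n) v = (\<lambda>x. (if n \<in> x then -1 else 1) * v x)"
proof -
  have "{m. Zop n m \<noteq> PI} = {n}"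
    unfolding Zop_def by auto
  then show ?thesis
    unfolding apply_pauli_sym_diff flips_Zop string_phase_def by (simp add: Zop_def)
qed

definition bare_energy :: "nat \<Rightarrow> (nat \<Rightarrow> real) \<Rightarrow> nat set \<Rightarrow> real" where
  "bare_energy Nq h x = - (\<Sum>n<Nq. h n * (if n \<in> x then -1 else 1))"

lemma bare_energy_empty: "bare_energy Nq h {} = - (\<Sum>n<Nq. h n)"
  unfolding bare_energy_def by simp

lemma bare_energy_split:
  "bare_energy Nq h x = bare_energy Nq h (x \<inter> Q) + bare_energy Nq h (x - Q) + (\<Sum>n<Nq. h n)"
  unfolding bare_energy_def by (simp add: sum_negf[symmetric] sum.distrib[symmetric])
    (intro sum.cong refl, auto)

lemma bare_energy_ge:
  assumes h_pos: "\<forall>n<Nq. h n > 0" and gap: "\<forall>n<Nq. gap \<le> 2 * h n"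
    and x: "x \<subseteq> {..<Nq}" "x \<noteq> {}"
  shows "bare_energy Nq h x \<ge> - (\<Sum>n<Nq. h n) + gap"
proof -
  obtain n0 where n0: "n0 \<in> x"
    using x by auto
  then have "n0 < Nq"
    using x by auto
  have "bare_energy Nq h x + (\<Sum>n<Nq. h n) = (\<Sum>n<Nq. if n \<in> x then 2 * h n else 0)"
    unfolding bare_energy_def by (simp add: sum_negf[symmetric] sum.distrib[symmetric])
      (intro sum.cong refl, auto)
  also have "\<dots> \<ge> (if n0 \<in> x then 2 * h n0 else 0)"
    by (rule member_le_sum[where f="\<lambda>n. if n \<in> x then 2 * h n else 0"])
      (use h_pos \<open>n0 < Nq\<close> in auto)
  finally show ?thesis
    using n0 gap \<open>n0 < Nq\<close> by auto
qed

lemma hamiltonian_eq: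
  "hamiltonian Nq h Nc V J v =
     (\<lambda>y. complex_of_real (bare_energy Nq h y) * v y +
          (\<Sum>i<Nc. complex_of_real (J i) * apply_pauli (V i) v y))"
proof -
  have "(\<Sum>n<Nq. complex_of_real (h n) * ((if n \<in> y then -1 else 1) * v y)) =
        complex_of_real (\<Sum>n<Nq. h n * (if n \<in> y then -1 else 1)) * v y" for y
    unfolding of_real_sum sum_distrib_right by (intro sum.cong refl) simp
  then show ?thesis
    unfolding hamiltonian_def bare_energy_def apply_pauli_Zop by (simp add: fun_eq_iff)
qed

lemma apply_pauli_diff:
  "apply_pauli P (\<lambda>x. a * f x - b * g x) = (\<lambda>y. a * apply_pauli P f y - b * apply_pauli P g y)"
  unfolding apply_pauli_def by (simp add: fun_eq_iff right_diff_distrib mult.left_commute)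

lemma hamiltonian_diff:
  "hamiltonian Nq h Nc V J (\<lambda>x. a * f x - b * g x) =
     (\<lambda>y. a * hamiltonian Nq h Nc V J f y - b * hamiltonian Nq h Nc V J g y)"
  unfolding hamiltonian_eq apply_pauli_diff
  by (simp add: fun_eq_iff algebra_simps sum_subtractf sum_distrib_left)

lemma state_inner_hamiltonian_left:
  "state_inner Nq (hamiltonian Nq h Nc V J u) v =
     (\<Sum>x\<in>Pow {..<Nq}. complex_of_real (bare_energy Nq h x) * cnj (u x) * v x) +
     (\<Sum>i<Nc. complex_of_real (J i) * state_inner Nq (apply_pauli (V i) u) v)"
  unfolding hamiltonian_eq state_inner_def
  by (simp add: distrib_right sum.distrib sum_distrib_left sum_distrib_right cnj_sum mult.assoc)
    (rule sum.swap)

lemma hamiltonian_self_adjoint: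
  assumes V: "\<forall>i<Nc. is_pauli_string Nq (V i)"
  shows "state_inner Nq (hamiltonian Nq h Nc V J u) v = state_inner Nq u (hamiltonian Nq h Nc V J v)"
proof -
  have "state_inner Nq u (hamiltonian Nq h Nc V J v) =
      cnj (state_inner Nq (hamiltonian Nq h Nc V J v) u)"
    by (rule state_inner_commute)
  also have "\<dots> = (\<Sum>x\<in>Pow {..<Nq}. complex_of_real (bare_energy Nq h x) * cnj (u x) * v x) +
      (\<Sum>i<Nc. complex_of_real (J i) * state_inner Nq u (apply_pauli (V i) v))"
    unfolding state_inner_hamiltonian_left
    by (simp add: cnj_sum state_inner_commute[of Nq u] mult.commute mult.left_commute)
  also have "\<dots> = state_inner Nq (hamiltonian Nq h Nc V J u) v"
    unfolding state_inner_hamiltonian_left using state_inner_apply_pauli V by simp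
  finally show ?thesis ..
qed

lemma Re_sum_bare_energy_ge:
  assumes h_pos: "\<forall>n<Nq. h n > 0" and gap: "\<forall>n<Nq. gap \<le> 2 * h n"
    and u0: "u {} = 0"
  shows "Re (\<Sum>x\<in>Pow {..<Nq}. complex_of_real (bare_energy Nq h x) * cnj (u x) * u x) \<ge>
           (- (\<Sum>n<Nq. h n) + gap) * sq_norm Nq u"
proof -
  have "(- (\<Sum>n<Nq. h n) + gap) * (cmod (u x))\<^sup>2 \<le> bare_energy Nq h x * (cmod (u x))\<^sup>2"
    if "x \<in> Pow {..<Nq}" for x
  proof (cases "x = {}")
    case True
    then show ?thesis
      using u0 by simp
  next
    case False
    then show ?thesis
      using bare_energy_ge[OF h_pos gap, of x] that by (intro mult_right_mono) auto
  qed
  then have "(- (\<Sum>n<Nq. h n) + gap) * sq_norm Nq u \<le>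
      (\<Sum>x\<in>Pow {..<Nq}. bare_energy Nq h x * (cmod (u x))\<^sup>2)"
    unfolding sq_norm_def sum_distrib_left by (intro sum_mono) auto
  also have "\<dots> = Re (\<Sum>x\<in>Pow {..<Nq}. complex_of_real (bare_energy Nq h x) * cnj (u x) * u x)"
  proof -
    have "complex_of_real b * cnj z * z = complex_of_real (b * (cmod z)\<^sup>2)" for b z
      by (simp only: mult.assoc mult.commute[of "cnj z"] complex_norm_square of_real_mult)
    then show ?thesis
      by (simp only: Re_sum Re_complex_of_real)
  qed
  finally show ?thesis .
qed

lemma Re_state_inner_apply_pauli_ge:
  assumes "is_pauli_string Nq P"
  shows "Re (complex_of_real j * state_inner Nq u (apply_pauli P u)) \<ge> - \<bar>j\<bar> * sq_norm Nq u"
proof -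
  have "\<bar>Re (complex_of_real j * state_inner Nq u (apply_pauli P u))\<bar> \<le>
      \<bar>j\<bar> * cmod (state_inner Nq u (apply_pauli P u))"
    using abs_Re_le_cmod[of "complex_of_real j * _"] by (simp only: norm_mult norm_of_real)
  also have "\<dots> \<le> \<bar>j\<bar> * sq_norm Nq u"
    using norm_state_inner_apply_pauli_le[OF assms] by (rule mult_left_mono) simp
  finally show ?thesis
    by linarith
qed

lemma state_inner_hamiltonian_self:
  assumes V: "\<forall>i<Nc. is_pauli_string Nq (V i)"
  shows "state_inner Nq u (hamiltonian Nq h Nc V J u) =
      (\<Sum>x\<in>Pow {..<Nq}. complex_of_real (bare_energy Nq h x) * cnj (u x) * u x) +
      (\<Sum>i<Nc. complex_of_real (J i) * state_inner Nq u (apply_pauli (V i) u))"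
  using state_inner_hamiltonian_left[of Nq h Nc V J u u] hamiltonian_self_adjoint[OF V]
    state_inner_apply_pauli V by simp

lemma Re_state_inner_hamiltonian_ge:
  assumes V: "\<forall>i<Nc. is_pauli_string Nq (V i)"
    and h_pos: "\<forall>n<Nq. h n > 0" and gap: "\<forall>n<Nq. gap \<le> 2 * h n"
    and u0: "u {} = 0"
  shows "Re (state_inner Nq u (hamiltonian Nq h Nc V J u)) \<ge>
           (- (\<Sum>n<Nq. h n) + gap - (\<Sum>i<Nc. \<bar>J i\<bar>)) * sq_norm Nq u"
proof -
  have "Re (\<Sum>i<Nc. complex_of_real (J i) * state_inner Nq u (apply_pauli (V i) u)) \<ge>
      - (\<Sum>i<Nc. \<bar>J i\<bar>) * sq_norm Nq u"
    using sum_mono[of "{..<Nc}" "\<lambda>i. - \<bar>J i\<bar> * sq_norm Nq u"] Re_state_inner_apply_pauli_ge V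
    by (simp add: Re_sum sum_distrib_right sum_negf)
  moreover have "(- (\<Sum>n<Nq. h n) + gap - (\<Sum>i<Nc. \<bar>J i\<bar>)) * sq_norm Nq u =
      (- (\<Sum>n<Nq. h n) + gap) * sq_norm Nq u + - (\<Sum>i<Nc. \<bar>J i\<bar>) * sq_norm Nq u"
    by (simp add: algebra_simps)
  ultimately show ?thesis
    using Re_sum_bare_energy_ge[where u=u, OF h_pos gap u0]
    unfolding state_inner_hamiltonian_self[OF V] by (simp only: plus_complex.sel)
qed

lemma state_inner_eigenvectors_orthogonal:
  fixes lam mu :: real
  assumes V: "\<forall>i<Nc. is_pauli_string Nq (V i)"
    and Hv: "hamiltonian Nq h Nc V J v = (\<lambda>x. complex_of_real lam * v x)"
    and Hw: "hamiltonian Nq h Nc V J w = (\<lambda>x. complex_of_real mu * w x)"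
    and "lam \<noteq> mu"
  shows "state_inner Nq v w = 0"
proof -
  have "state_inner Nq (hamiltonian Nq h Nc V J v) w = state_inner Nq v (hamiltonian Nq h Nc V J w)"
    by (rule hamiltonian_self_adjoint[OF V])
  then have "complex_of_real lam * state_inner Nq v w = complex_of_real mu * state_inner Nq v w"
    unfolding Hv Hw state_inner_def by (simp add: sum_distrib_left mult.assoc mult.left_commute)
  then show ?thesis
    using \<open>lam \<noteq> mu\<close> by simp
qed

lemma Re_state_inner_hamiltonian_combination_le:
  fixes lam mu :: real and a b :: complex
  assumes V: "\<forall>i<Nc. is_pauli_string Nq (V i)"
    and Hv: "hamiltonian Nq h Nc V J v = (\<lambda>x. complex_of_real lam * v x)"
    and Hw: "hamiltonian Nq h Nc V J w = (\<lambda>x. complex_of_real mu * w x)"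
  defines "u \<equiv> \<lambda>x. a * v x - b * w x"
  shows "Re (state_inner Nq u (hamiltonian Nq h Nc V J u)) \<le> max lam mu * sq_norm Nq u"
proof (cases "lam = mu")
  case True
  then have "hamiltonian Nq h Nc V J u = (\<lambda>x. complex_of_real lam * u x)"
    unfolding u_def hamiltonian_diff Hv Hw by (simp add: fun_eq_iff algebra_simps)
  then have "state_inner Nq u (hamiltonian Nq h Nc V J u) = complex_of_real lam * state_inner Nq u u"
    unfolding state_inner_def by (simp add: sum_distrib_left mult.left_commute)
  then show ?thesis
    by (simp add: state_inner_self mult_right_mono sq_norm_nonneg)
next
  case False
  have vw: "state_inner Nq v w = 0" and wv: "state_inner Nq w v = 0"
    using state_inner_eigenvectors_orthogonal[OF V Hv Hw False]
      state_inner_commute[of Nq w v] by simp_all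
  have combination: "state_inner Nq u (\<lambda>x. a * c * v x - b * d * w x) =
      complex_of_real ((cmod a)\<^sup>2 * sq_norm Nq v) * c + complex_of_real ((cmod b)\<^sup>2 * sq_norm Nq w) * d"
    for c d
    unfolding u_def state_inner_diff_left state_inner_diff_right state_inner_self vw wv
    by (simp add: algebra_simps complex_norm_square del: of_real_power)
  have "complex_of_real (sq_norm Nq u) =
      complex_of_real ((cmod a)\<^sup>2 * sq_norm Nq v + (cmod b)\<^sup>2 * sq_norm Nq w)"
    using combination[of 1 1] by (simp only: mult_1_right u_def[symmetric] state_inner_self of_real_add)
  then have "sq_norm Nq u = (cmod a)\<^sup>2 * sq_norm Nq v + (cmod b)\<^sup>2 * sq_norm Nq w"
    by (simp only: of_real_eq_iff)
  moreover have "hamiltonian Nq h Nc V J u = (\<lambda>x. a * lam * v x - b * mu * w x)"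
    unfolding u_def hamiltonian_diff Hv Hw by (simp add: mult.assoc)
  then have "Re (state_inner Nq u (hamiltonian Nq h Nc V J u)) =
      lam * ((cmod a)\<^sup>2 * sq_norm Nq v) + mu * ((cmod b)\<^sup>2 * sq_norm Nq w)"
    using combination[of lam mu] by simp
  moreover have "lam * s \<le> max lam mu * s" "mu * s \<le> max lam mu * s" if "s \<ge> 0" for s
    using that by (simp_all add: mult_right_mono)
  ultimately show ?thesis
    by (simp add: distrib_left sq_norm_nonneg add_mono)
qed

text \<open>The spectral gap of the unperturbed Hamiltonian survives small couplings: below the
  threshold, every state orthogonal to the vacuum has higher energy, so the low-lying
  eigenspace is one-dimensional.\<close>

lemma eigenvectors_below_gap_proportional:
  fixes lam mu :: real
  assumes V: "\<forall>i<Nc. is_pauli_string Nq (V i)"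
    and h_pos: "\<forall>n<Nq. h n > 0" and gap: "\<forall>n<Nq. gap \<le> 2 * h n"
    and v: "v \<in> qstates Nq" and w: "w \<in> qstates Nq"
    and Hv: "hamiltonian Nq h Nc V J v = (\<lambda>x. complex_of_real lam * v x)"
    and Hw: "hamiltonian Nq h Nc V J w = (\<lambda>x. complex_of_real mu * w x)"
    and lam: "lam < - (\<Sum>n<Nq. h n) + gap - (\<Sum>i<Nc. \<bar>J i\<bar>)"
    and mu: "mu < - (\<Sum>n<Nq. h n) + gap - (\<Sum>i<Nc. \<bar>J i\<bar>)"
  shows "(\<lambda>x. w {} * v x) = (\<lambda>x. v {} * w x)"
proof -
  define u where "u = (\<lambda>x. w {} * v x - v {} * w x)"
  let ?threshold = "- (\<Sum>n<Nq. h n) + gap - (\<Sum>i<Nc. \<bar>J i\<bar>)"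
  have "?threshold * sq_norm Nq u \<le> max lam mu * sq_norm Nq u"
    using order_trans[OF Re_state_inner_hamiltonian_ge[OF V h_pos gap, of u J]
        Re_state_inner_hamiltonian_combination_le[OF V Hv Hw, of "w {}" "v {}", folded u_def]]
    by (simp add: u_def)
  then have "(?threshold - max lam mu) * sq_norm Nq u \<le> 0"
    by (simp add: left_diff_distrib)
  moreover have "?threshold - max lam mu > 0"
    using lam mu by simp
  ultimately have "sq_norm Nq u \<le> 0"
    by (simp add: mult_le_0_iff)
  then have "u = (\<lambda>_. 0)"
    using v w sq_norm_nonneg[of Nq u] by (intro sq_norm_eq_0_imp_zero) (auto simp: u_def qstates_def)
  then show ?thesis
    unfolding u_def by (auto simp: fun_eq_iff)
qed

lemma phased_states_eq_if_proportional:
  assumes proportional: "(\<lambda>x. w {} * v x) = (\<lambda>x. v {} * w x)"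
    and "sq_norm Nq v = 1" "Im (v {}) = 0" "Re (v {}) > 0"
    and "sq_norm Nq w = 1" "Im (w {}) = 0" "Re (w {}) > 0"
  shows "v = w"
proof -
  have "(cmod (w {}))\<^sup>2 = (cmod (v {}))\<^sup>2"
    using arg_cong[OF proportional, of "sq_norm Nq"] assms(2,5) by (simp only: sq_norm_mult mult_1_right)
  moreover have "cmod (v {}) = Re (v {})" "cmod (w {}) = Re (w {})"
    using assms by (simp_all add: cmod_def)
  ultimately have "Re (w {}) = Re (v {})"
    using assms by (simp add: power2_eq_iff)
  then have "w {} = v {}"
    using assms by (simp add: complex_eq_iff)
  then show ?thesis
    using proportional assms by (auto simp: fun_eq_iff)
qed

lemma eigenvalue_le_if_vacuum_amplitude_ge:
  assumes v: "v \<in> qstates Nq" and norm_v: "sq_norm Nq v = 1"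
    and Hv: "hamiltonian Nq h Nc V J v = (\<lambda>x. complex_of_real e * v x)"
    and v0: "cmod (v {}) \<ge> 1 / 2"
  shows "e \<le> - (\<Sum>n<Nq. h n) + 2 * (\<Sum>i<Nc. \<bar>J i\<bar>)"
proof -
  have bounded: "cmod (v x) \<le> 1" for x
  proof (cases "x \<subseteq> {..<Nq}")
    case True
    have "(cmod (v x))\<^sup>2 \<le> sq_norm Nq v"
      unfolding sq_norm_def by (rule member_le_sum) (use True in auto)
    then show ?thesis
      using norm_v by (simp add: power_le_one_iff abs_le_square_iff)
  next
    case False
    then show ?thesis
      using v unfolding qstates_def by auto
  qed
  let ?d = "e - bare_energy Nq h {}"
  have "complex_of_real ?d * v {} = (\<Sum>i<Nc. complex_of_real (J i) * apply_pauli (V i) v {})"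
    using fun_cong[OF Hv, of "{}"] unfolding hamiltonian_eq by (simp add: algebra_simps)
  then have "\<bar>?d\<bar> * cmod (v {}) = cmod (\<Sum>i<Nc. complex_of_real (J i) * apply_pauli (V i) v {})"
    by (metis norm_mult norm_of_real)
  also have "\<dots> \<le> (\<Sum>i<Nc. \<bar>J i\<bar> * cmod (apply_pauli (V i) v {}))"
    using norm_sum[of "\<lambda>i. complex_of_real (J i) * apply_pauli (V i) v {}" "{..<Nc}"]
    by (simp add: norm_mult)
  also have "\<dots> \<le> (\<Sum>i<Nc. \<bar>J i\<bar>)"
    using bounded by (intro sum_mono) (simp add: apply_pauli_sym_diff norm_mult mult_left_le)
  finally have upper: "\<bar>?d\<bar> * cmod (v {}) \<le> (\<Sum>i<Nc. \<bar>J i\<bar>)" .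
  have "?d * (1 / 2) \<le> \<bar>?d\<bar> * (1 / 2)"
    by (intro mult_right_mono) simp_all
  also have "\<dots> \<le> \<bar>?d\<bar> * cmod (v {})"
    by (rule mult_left_mono[OF v0 abs_ge_zero])
  also note upper
  finally have "?d * (1 / 2) \<le> (\<Sum>i<Nc. \<bar>J i\<bar>)" .
  then show ?thesis
    unfolding bare_energy_empty by simp
qed

section \<open>Tensor products\<close>

definition tensor :: "nat set \<Rightarrow> state \<Rightarrow> state \<Rightarrow> state" where
  "tensor Q f g = (\<lambda>x. f (x \<inter> Q) * g (x - Q))"

lemma apply_pauli_tensor_left:
  assumes "{n. P n \<noteq> PI} \<subseteq> Q"
  shows "apply_pauli P (tensor Q f g) = tensor Q (apply_pauli P f) g"
proof -
  have "flips P \<subseteq> Q"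
    using flips_subset assms by blast
  then have "sym_diff y (flips P) \<inter> Q = sym_diff (y \<inter> Q) (flips P)"
    and "sym_diff y (flips P) - Q = y - Q" for y
    by blast+
  moreover have "string_phase P (sym_diff y (flips P)) = string_phase P (sym_diff (y \<inter> Q) (flips P))" for y
    by (rule string_phase_cong) (use assms in blast)
  ultimately show ?thesis
    unfolding apply_pauli_sym_diff tensor_def by (simp add: mult.assoc)
qed

lemma apply_pauli_tensor_right:
  assumes "{n. P n \<noteq> PI} \<inter> Q = {}"
  shows "apply_pauli P (tensor Q f g) = tensor Q f (apply_pauli P g)"
proof -
  have "flips P \<inter> Q = {}"
    using flips_subset assms by blast
  then have "sym_diff y (flips P) \<inter> Q = y \<inter> Q"
    and "sym_diff y (flips P) - Q = sym_diff (y - Q) (flips P)" for y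
    by blast+
  moreover have "string_phase P (sym_diff y (flips P)) = string_phase P (sym_diff (y - Q) (flips P))" for y
    by (rule string_phase_cong) (use assms in blast)
  ultimately show ?thesis
    unfolding apply_pauli_sym_diff tensor_def by (simp add: mult.left_commute)
qed

lemma funpow_apply_pauli_tensor_left:
  "{n. P n \<noteq> PI} \<subseteq> Q \<Longrightarrow>
     (apply_pauli P ^^ j) (tensor Q f g) = tensor Q ((apply_pauli P ^^ j) f) g"
  by (induction j) (auto simp: apply_pauli_tensor_left)

lemma funpow_apply_pauli_tensor_right:
  "{n. P n \<noteq> PI} \<inter> Q = {} \<Longrightarrow>
     (apply_pauli P ^^ j) (tensor Q f g) = tensor Q f ((apply_pauli P ^^ j) g)"
  by (induction j) (auto simp: apply_pauli_tensor_right)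

lemma ket0_eq_tensor: "ket0 = tensor Q ket0 ket0"
  unfolding ket0_def tensor_def by (auto simp: fun_eq_iff)

lemma op_pow_ket0_tensor:
  assumes "\<forall>i<m. a i = 0 \<or> b i = 0"
    and "\<forall>i<m. a i \<noteq> 0 \<longrightarrow> {n. V i n \<noteq> PI} \<subseteq> Q"
    and "\<forall>i<m. b i \<noteq> 0 \<longrightarrow> {n. V i n \<noteq> PI} \<inter> Q = {}"
  shows "op_pow V (\<lambda>i. a i + b i) m ket0 = tensor Q (op_pow V a m ket0) (op_pow V b m ket0)"
  using assms
proof (induction m)
  case 0
  then show ?case
    using ket0_eq_tensor by simp
next
  case (Suc m)
  have IH: "op_pow V (\<lambda>i. a i + b i) m ket0 = tensor Q (op_pow V a m ket0) (op_pow V b m ket0)"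
    using Suc.prems by (intro Suc.IH) auto
  have "a m = 0 \<or> b m = 0"
    using Suc.prems(1) by simp
  then consider (neither) "a m = 0" "b m = 0" | (B) "a m = 0" "b m \<noteq> 0" | (A) "a m \<noteq> 0" "b m = 0"
    by auto
  then show ?case
  proof cases
    case neither
    then show ?thesis
      using IH by simp
  next
    case B
    then have "{n. V m n \<noteq> PI} \<inter> Q = {}"
      using Suc.prems(3) by simp
    then show ?thesis
      using B IH by (simp add: funpow_apply_pauli_tensor_right)
  next
    case A
    then have "{n. V m n \<noteq> PI} \<subseteq> Q"
      using Suc.prems(2) by simp
    then show ?thesis
      using A IH by (simp add: funpow_apply_pauli_tensor_left)
  qed
qed

lemma tensor_in_qstates:
  assumes "f \<in> qstates Nq" "g \<in> qstates Nq"
  shows "tensor Q f g \<in> qstates Nq"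
  unfolding qstates_def tensor_def
proof (intro CollectI allI impI)
  fix x :: "nat set"
  assume "\<not> x \<subseteq> {..<Nq}"
  then have "\<not> x \<inter> Q \<subseteq> {..<Nq} \<or> \<not> x - Q \<subseteq> {..<Nq}"
    by blast
  then show "f (x \<inter> Q) * g (x - Q) = 0"
  proof
    assume "\<not> x \<inter> Q \<subseteq> {..<Nq}"
    then show ?thesis
      using assms(1) unfolding qstates_def by simp
  next
    assume "\<not> x - Q \<subseteq> {..<Nq}"
    then show ?thesis
      using assms(2) unfolding qstates_def by simp
  qed
qed

lemma sq_norm_tensor:
  assumes f: "\<forall>x. \<not> x \<subseteq> Q \<longrightarrow> f x = 0" and g: "\<forall>x. x \<inter> Q \<noteq> {} \<longrightarrow> g x = 0"
  shows "sq_norm Nq (tensor Q f g) = sq_norm Nq f * sq_norm Nq g"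
proof -
  let ?N = "{..<Nq}"
  have "sq_norm Nq f = (\<Sum>a\<in>Pow (?N \<inter> Q). (cmod (f a))\<^sup>2)"
    unfolding sq_norm_def by (rule sum.mono_neutral_right) (use f in auto)
  moreover have "sq_norm Nq g = (\<Sum>b\<in>Pow (?N - Q). (cmod (g b))\<^sup>2)"
    unfolding sq_norm_def by (rule sum.mono_neutral_right) (use g in auto)
  ultimately have "sq_norm Nq f * sq_norm Nq g =
      (\<Sum>(a, b)\<in>Pow (?N \<inter> Q) \<times> Pow (?N - Q). (cmod (f a))\<^sup>2 * (cmod (g b))\<^sup>2)"
    by (simp add: sum_product sum.cartesian_product)
  also have "\<dots> = (\<Sum>x\<in>Pow ?N. (cmod (f (x \<inter> Q)))\<^sup>2 * (cmod (g (x - Q)))\<^sup>2)"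
  proof -
    have "(a \<union> b) \<inter> Q = a" "(a \<union> b) - Q = b" if "a \<subseteq> Q" "b \<subseteq> ?N - Q" for a b
      using that by blast+
    then show ?thesis
      by (intro sum.reindex_bij_witness[where i="\<lambda>x. (x \<inter> Q, x - Q)" and j="\<lambda>(a, b). a \<union> b"])
        auto
  qed
  also have "\<dots> = sq_norm Nq (tensor Q f g)"
    unfolding sq_norm_def tensor_def by (simp add: norm_mult power_mult_distrib)
  finally show ?thesis ..
qed

lemma coupling_term_tensor:
  assumes "jA = 0 \<or> jB = 0"
    and "jA \<noteq> 0 \<Longrightarrow> {n. P n \<noteq> PI} \<subseteq> Q" and "jB \<noteq> 0 \<Longrightarrow> {n. P n \<noteq> PI} \<inter> Q = {}"
  shows "complex_of_real (jA + jB) * apply_pauli P (tensor Q fA fB) y =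
      complex_of_real jA * apply_pauli P fA (y \<inter> Q) * fB (y - Q) +
      fA (y \<inter> Q) * (complex_of_real jB * apply_pauli P fB (y - Q))"
proof (cases "jA = 0")
  case True
  show ?thesis
  proof (cases "jB = 0")
    case False
    with assms(3) have "apply_pauli P (tensor Q fA fB) = tensor Q fA (apply_pauli P fB)"
      by (intro apply_pauli_tensor_right)
    then show ?thesis
      using True by (simp add: tensor_def mult.left_commute)
  qed (use True in simp)
next
  case False
  with assms(2) have "apply_pauli P (tensor Q fA fB) = tensor Q (apply_pauli P fA) fB"
    by (intro apply_pauli_tensor_left)
  then show ?thesis
    using False assms(1) by (simp add: tensor_def)
qed

lemma hamiltonian_tensor:
  assumes disjoint: "\<forall>i<Nc. JA i = 0 \<or> JB i = 0"
    and A: "\<forall>i<Nc. JA i \<noteq> 0 \<longrightarrow> {n. V i n \<noteq> PI} \<subseteq> Q"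
    and B: "\<forall>i<Nc. JB i \<noteq> 0 \<longrightarrow> {n. V i n \<noteq> PI} \<inter> Q = {}"
    and HA: "hamiltonian Nq h Nc V JA fA = (\<lambda>x. complex_of_real eA * fA x)"
    and HB: "hamiltonian Nq h Nc V JB fB = (\<lambda>x. complex_of_real eB * fB x)"
  shows "hamiltonian Nq h Nc V (\<lambda>i. JA i + JB i) (tensor Q fA fB) =
           (\<lambda>x. complex_of_real (eA + eB + (\<Sum>n<Nq. h n)) * tensor Q fA fB x)"
proof
  fix y
  define yA yB where "yA = y \<inter> Q" and "yB = y - Q"
  define coupA where "coupA = (\<Sum>i<Nc. complex_of_real (JA i) * apply_pauli (V i) fA yA)"
  define coupB where "coupB = (\<Sum>i<Nc. complex_of_real (JB i) * apply_pauli (V i) fB yB)"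
  have "complex_of_real (JA i + JB i) * apply_pauli (V i) (tensor Q fA fB) y =
      complex_of_real (JA i) * apply_pauli (V i) fA yA * fB yB +
      fA yA * (complex_of_real (JB i) * apply_pauli (V i) fB yB)" if "i < Nc" for i
    unfolding yA_def yB_def using disjoint A B that by (intro coupling_term_tensor) auto
  then have coup: "(\<Sum>i<Nc. complex_of_real (JA i + JB i) * apply_pauli (V i) (tensor Q fA fB) y) =
      coupA * fB yB + fA yA * coupB"
    unfolding coupA_def coupB_def by (simp add: sum.distrib sum_distrib_left sum_distrib_right)
  have coupA_eq: "coupA = complex_of_real eA * fA yA - complex_of_real (bare_energy Nq h yA) * fA yA"
    using fun_cong[OF HA, of yA] unfolding hamiltonian_eq coupA_def by (simp add: algebra_simps)
  have coupB_eq: "coupB = complex_of_real eB * fB yB - complex_of_real (bare_energy Nq h yB) * fB yB"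
    using fun_cong[OF HB, of yB] unfolding hamiltonian_eq coupB_def by (simp add: algebra_simps)
  have bare_eq: "bare_energy Nq h y = bare_energy Nq h yA + bare_energy Nq h yB + (\<Sum>n<Nq. h n)"
    unfolding yA_def yB_def by (rule bare_energy_split)
  show "hamiltonian Nq h Nc V (\<lambda>i. JA i + JB i) (tensor Q fA fB) y =
      complex_of_real (eA + eB + (\<Sum>n<Nq. h n)) * tensor Q fA fB y"
    unfolding hamiltonian_eq coup coupA_eq coupB_eq bare_eq
    unfolding tensor_def yA_def[symmetric] yB_def[symmetric]
    by (simp add: algebra_simps)
qed

section \<open>The perturbative ground state\<close>

lemma tensor_phased_state:
  assumes f: "f \<in> qstates Nq" "sq_norm Nq f = 1" "Im (f {}) = 0" "Re (f {}) > 0"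
    and g: "g \<in> qstates Nq" "sq_norm Nq g = 1" "Im (g {}) = 0" "Re (g {}) > 0"
    and f_supp: "\<forall>x. \<not> x \<subseteq> Q \<longrightarrow> f x = 0" and g_supp: "\<forall>x. x \<inter> Q \<noteq> {} \<longrightarrow> g x = 0"
  shows "tensor Q f g \<in> qstates Nq" "sq_norm Nq (tensor Q f g) = 1"
    "Im (tensor Q f g {}) = 0" "Re (tensor Q f g {}) > 0"
proof -
  show "tensor Q f g \<in> qstates Nq"
    using tensor_in_qstates f(1) g(1) .
  show "sq_norm Nq (tensor Q f g) = 1"
    using f(2) g(2) by (simp add: sq_norm_tensor[OF f_supp g_supp])
  have "tensor Q f g {} = complex_of_real (Re (f {}) * Re (g {}))"
    using f(3) g(3) by (simp add: tensor_def complex_eq_iff)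
  then show "Im (tensor Q f g {}) = 0" "Re (tensor Q f g {}) > 0"
    using f(4) g(4) by simp_all
qed

locale ground_state_expansion =
  fixes Nq Nc :: nat and h :: "nat \<Rightarrow> real" and V :: "nat \<Rightarrow> nat \<Rightarrow> pauli"
    and C :: "(nat \<Rightarrow> nat) \<Rightarrow> real" and \<epsilon> :: real
  assumes h_pos: "\<forall>n<Nq. h n > 0"
    and V_pauli: "\<forall>i<Nc. is_pauli_string Nq (V i)"
    and eps_pos: "\<epsilon> > 0"
    and expansion: "\<forall>J :: nat \<Rightarrow> real. (\<forall>i<Nc. \<bar>J i\<bar> < \<epsilon>) \<longrightarrow>
        (\<exists>\<psi>. (\<forall>x. ((\<lambda>k. complex_of_real (mono_pow Nc J k * C k) * op_pow V k Nc ket0 x)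
                        has_sum \<psi> x) (multi_idx Nc))
             \<and> is_phased_ground_state Nq (hamiltonian Nq h Nc V J) \<psi>)"
begin

definition ground_state :: "(nat \<Rightarrow> real) \<Rightarrow> state" where
  "ground_state J = (\<lambda>x. \<Sum>\<^sub>\<infinity>k\<in>multi_idx Nc. complex_of_real (mono_pow Nc J k * C k) * op_pow V k Nc ket0 x)"

lemma expansion_eq_ground_state:
  assumes "\<forall>x. ((\<lambda>k. complex_of_real (mono_pow Nc J k * C k) * op_pow V k Nc ket0 x)
                 has_sum \<psi> x) (multi_idx Nc)"
  shows "\<psi> = ground_state J"
  unfolding ground_state_def using assms by (auto intro: infsumI[symmetric])

lemma has_sum_ground_state:
  assumes "\<forall>i<Nc. \<bar>J i\<bar> < \<epsilon>"
  shows "((\<lambda>k. complex_of_real (mono_pow Nc J k * C k) * op_pow V k Nc ket0 x)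
           has_sum ground_state J x) (multi_idx Nc)"
proof -
  obtain \<psi> where "\<forall>x. ((\<lambda>k. complex_of_real (mono_pow Nc J k * C k) * op_pow V k Nc ket0 x)
                            has_sum \<psi> x) (multi_idx Nc)"
    using expansion assms by blast
  with expansion_eq_ground_state[OF this] show ?thesis
    by simp
qed

lemma phased_ground_state:
  assumes "\<forall>i<Nc. \<bar>J i\<bar> < \<epsilon>"
  shows "ground_state J \<in> qstates Nq" "sq_norm Nq (ground_state J) = 1"
    "Im (ground_state J {}) = 0" "Re (ground_state J {}) > 0"
    "\<exists>e. hamiltonian Nq h Nc V J (ground_state J) = (\<lambda>x. complex_of_real e * ground_state J x)"
proof -
  obtain \<psi> where \<psi>: "\<forall>x. ((\<lambda>k. complex_of_real (mono_pow Nc J k * C k) * op_pow V k Nc ket0 x)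
                              has_sum \<psi> x) (multi_idx Nc)"
    and "is_phased_ground_state Nq (hamiltonian Nq h Nc V J) \<psi>"
    using expansion assms by blast
  then have "is_phased_ground_state Nq (hamiltonian Nq h Nc V J) (ground_state J)"
    using expansion_eq_ground_state[OF \<psi>] by simp
  then show "ground_state J \<in> qstates Nq" "sq_norm Nq (ground_state J) = 1"
    "Im (ground_state J {}) = 0" "Re (ground_state J {}) > 0"
    "\<exists>e. hamiltonian Nq h Nc V J (ground_state J) = (\<lambda>x. complex_of_real e * ground_state J x)"
    unfolding is_phased_ground_state_def is_ground_state_def is_eigenpair_def by auto
qed

definition taylor_coeff :: "(nat \<Rightarrow> nat) \<Rightarrow> state" where
  "taylor_coeff k = (\<lambda>x. complex_of_real (C k) * op_pow V k Nc ket0 x)"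

lemma has_sum_taylor_coeff:
  assumes "\<forall>i<Nc. \<bar>J i\<bar> < \<epsilon>"
  shows "((\<lambda>k. complex_of_real (mono_pow Nc J k) * taylor_coeff k x) has_sum ground_state J x) (multi_idx Nc)"
  using has_sum_ground_state[OF assms] by (simp add: taylor_coeff_def mult.assoc)

lemma has_sum_taylor_coeff_zero_outside:
  assumes "\<forall>i<Nc. \<bar>J i\<bar> < \<epsilon>"
  shows "((\<lambda>k. complex_of_real (mono_pow Nc (zero_outside S J) k) * taylor_coeff k x)
           has_sum ground_state (zero_outside S J) x) (multi_idx Nc)"
  by (rule has_sum_taylor_coeff[OF abs_zero_outside_less[OF assms]])

lemma coeff_zero_idx: "C (\<lambda>_. 0) = 1"
proof -
  let ?J0 = "\<lambda>_. 0 :: real"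
  have box: "\<forall>i<Nc. \<bar>?J0 i\<bar> < \<epsilon>"
    using eps_pos by simp
  have "mono_pow Nc ?J0 k = 0" if k: "k \<in> multi_idx Nc" "k \<noteq> (\<lambda>_. 0)" for k
  proof -
    obtain i where "k i \<noteq> 0"
      using k(2) by auto
    moreover from this have "i < Nc"
      by (rule multi_idx_nonzero_entry[OF k(1)])
    ultimately show ?thesis
      unfolding mono_pow_def by (intro prod_zero bexI[of _ i]) auto
  qed
  then have "((\<lambda>k. complex_of_real (mono_pow Nc ?J0 k * C k) * op_pow V k Nc ket0 x)
               has_sum (complex_of_real (C (\<lambda>_. 0)) * ket0 x)) (multi_idx Nc)" for x
    by (intro has_sum_finite_neutralI[where B="{\<lambda>_. 0}"]) (auto simp: zero_in_multi_idx)
  then have gs: "ground_state ?J0 = (\<lambda>x. complex_of_real (C (\<lambda>_. 0)) * ket0 x)"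
    using has_sum_ground_state[OF box] by (auto intro: has_sum_unique)
  have "(C (\<lambda>_. 0))\<^sup>2 = 1"
    using phased_ground_state(2)[OF box] by (simp add: gs sq_norm_mult sq_norm_ket0)
  moreover have "C (\<lambda>_. 0) > 0"
    using phased_ground_state(4)[OF box] by (simp add: gs ket0_def)
  ultimately show ?thesis
    by (simp add: power2_eq_1_iff)
qed

lemma ground_state_vacuum_ge:
  "\<exists>r>0. r \<le> \<epsilon> \<and> (\<forall>J. (\<forall>i<Nc. \<bar>J i\<bar> < r) \<longrightarrow> cmod (ground_state J {}) \<ge> 1 / 2)"
proof -
  have "\<forall>i<Nc. \<bar>\<epsilon> / 2\<bar> < \<epsilon>"
    using eps_pos by simp
  from has_sum_imp_summable[OF has_sum_taylor_coeff[OF this]]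
  have summable: "(\<lambda>k. complex_of_real (mono_pow Nc (\<lambda>_. \<epsilon> / 2) k) * taylor_coeff k {})
                    summable_on multi_idx Nc" .
  have "\<epsilon> / 2 > 0" "(1 / 2 :: real) > 0"
    using eps_pos by simp_all
  from mono_pow_series_near_constant_term[OF this summable]
  obtain r where r: "r > 0" "r \<le> \<epsilon> / 2"
    and near: "\<forall>J s. (\<forall>i<Nc. \<bar>J i\<bar> < r) \<longrightarrow>
        ((\<lambda>k. complex_of_real (mono_pow Nc J k) * taylor_coeff k {}) has_sum s) (multi_idx Nc) \<longrightarrow>
        norm (s - taylor_coeff (\<lambda>_. 0) {}) \<le> 1 / 2"
    by blast
  have "cmod (ground_state J {}) \<ge> 1 / 2" if J: "\<forall>i<Nc. \<bar>J i\<bar> < r" for J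
  proof -
    have "\<forall>i<Nc. \<bar>J i\<bar> < \<epsilon>"
      using J r by force
    from near[rule_format, OF J[rule_format] has_sum_taylor_coeff[OF this]]
    have "norm (ground_state J {} - 1) \<le> 1 / 2"
      by (simp add: taylor_coeff_def coeff_zero_idx ket0_def)
    then show ?thesis
      using norm_triangle_ineq2[of 1 "ground_state J {}"] by (simp add: norm_minus_commute)
  qed
  then show ?thesis
    using r by (intro exI[of _ r]) auto
qed

lemma ground_state_eq_0_outside:
  assumes "\<forall>i<Nc. J i \<noteq> 0 \<longrightarrow> flips (V i) \<subseteq> Q" and "\<not> x \<subseteq> Q"
  shows "ground_state J x = 0"
proof -
  have term_0: "complex_of_real (mono_pow Nc J k * C k) * op_pow V k Nc ket0 x = 0" for k
  proof (cases "\<exists>i<Nc. k i \<noteq> 0 \<and> J i = 0")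
    case True
    then obtain i where "i < Nc" "k i \<noteq> 0" "J i = 0"
      by blast
    then have "mono_pow Nc J k = 0"
      unfolding mono_pow_def by (intro prod_zero bexI[of _ i]) auto
    then show ?thesis
      by simp
  next
    case False
    obtain c F where F: "F \<subseteq> (\<Union>i\<in>{i. i < Nc \<and> k i \<noteq> 0}. flips (V i))"
      and op: "op_pow V k Nc ket0 = (\<lambda>x. if x = F then c else 0)"
      using op_pow_ket0[where m=Nc and k=k and V=V] by blast
    have "F \<subseteq> Q"
    proof
      fix n
      assume "n \<in> F"
      then obtain i where "i < Nc" "k i \<noteq> 0" "n \<in> flips (V i)"
        using F by blast
      moreover from this have "J i \<noteq> 0"
        using False by auto
      ultimately show "n \<in> Q"
        using assms(1) by auto
    qed
    then show ?thesis
      using assms(2) by (auto simp: op)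
  qed
  show ?thesis
    unfolding ground_state_def by (rule infsum_0) (rule term_0)
qed

lemma ground_state_energy_le:
  "\<exists>r>0. r \<le> \<epsilon> \<and> (\<forall>J e. (\<forall>i<Nc. \<bar>J i\<bar> < r) \<longrightarrow>
      hamiltonian Nq h Nc V J (ground_state J) = (\<lambda>x. complex_of_real e * ground_state J x) \<longrightarrow>
      e \<le> - (\<Sum>n<Nq. h n) + 2 * (\<Sum>i<Nc. \<bar>J i\<bar>))"
proof -
  obtain r where r: "r > 0" "r \<le> \<epsilon>"
    and vacuum: "\<forall>J. (\<forall>i<Nc. \<bar>J i\<bar> < r) \<longrightarrow> cmod (ground_state J {}) \<ge> 1 / 2"
    using ground_state_vacuum_ge by blast
  have "e \<le> - (\<Sum>n<Nq. h n) + 2 * (\<Sum>i<Nc. \<bar>J i\<bar>)"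
    if J: "\<forall>i<Nc. \<bar>J i\<bar> < r"
      and eigen: "hamiltonian Nq h Nc V J (ground_state J) = (\<lambda>x. complex_of_real e * ground_state J x)"
    for J e
  proof (rule eigenvalue_le_if_vacuum_amplitude_ge[OF _ _ eigen])
    have "\<forall>i<Nc. \<bar>J i\<bar> < \<epsilon>"
      using J r by force
    then show "ground_state J \<in> qstates Nq" "sq_norm Nq (ground_state J) = 1"
      by (rule phased_ground_state)+
    show "cmod (ground_state J {}) \<ge> 1 / 2"
      using vacuum J by blast
  qed
  then show ?thesis
    using r by blast
qed

lemma exists_gap: "\<exists>gap>0. \<forall>n<Nq. gap \<le> 2 * h n"
proof -
  define gap where "gap = Min (insert 1 ((\<lambda>n. 2 * h n) ` {..<Nq}))"
  have "gap > 0"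
    unfolding gap_def using h_pos by (subst Min_gr_iff) auto
  moreover have "\<forall>n<Nq. gap \<le> 2 * h n"
    unfolding gap_def by (auto intro: Min_le)
  ultimately show ?thesis
    by blast
qed

lemma tensor_ground_states:
  assumes disjoint: "SA \<inter> SB = {}"
    and A: "\<forall>i\<in>SA. {n. V i n \<noteq> PI} \<subseteq> Q" and B: "\<forall>i\<in>SB. {n. V i n \<noteq> PI} \<inter> Q = {}"
    and J: "\<forall>i<Nc. \<bar>J i\<bar> < \<epsilon>"
    and eA: "hamiltonian Nq h Nc V (zero_outside SA J) (ground_state (zero_outside SA J)) =
               (\<lambda>x. complex_of_real eA * ground_state (zero_outside SA J) x)"
    and eB: "hamiltonian Nq h Nc V (zero_outside SB J) (ground_state (zero_outside SB J)) =
               (\<lambda>x. complex_of_real eB * ground_state (zero_outside SB J) x)"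
  defines "\<Phi> \<equiv> tensor Q (ground_state (zero_outside SA J)) (ground_state (zero_outside SB J))"
  shows "hamiltonian Nq h Nc V (zero_outside (SA \<union> SB) J) \<Phi> =
           (\<lambda>x. complex_of_real (eA + eB + (\<Sum>n<Nq. h n)) * \<Phi> x)"
    and "\<Phi> \<in> qstates Nq" "sq_norm Nq \<Phi> = 1" "Im (\<Phi> {}) = 0" "Re (\<Phi> {}) > 0"
proof -
  note box = abs_zero_outside_less[OF J]
  show "hamiltonian Nq h Nc V (zero_outside (SA \<union> SB) J) \<Phi> =
           (\<lambda>x. complex_of_real (eA + eB + (\<Sum>n<Nq. h n)) * \<Phi> x)"
    unfolding zero_outside_Un[OF disjoint] \<Phi>_def
    by (rule hamiltonian_tensor[OF _ _ _ eA eB]) (use disjoint A B in \<open>auto simp: zero_outside_def\<close>)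
  have "flips (V i) \<subseteq> Q" if "i \<in> SA" for i
    using A flips_subset[of "V i"] that by blast
  then have supp_A: "\<forall>x. \<not> x \<subseteq> Q \<longrightarrow> ground_state (zero_outside SA J) x = 0"
    by (intro allI impI ground_state_eq_0_outside) (auto simp: zero_outside_def split: if_splits)
  have "flips (V i) \<subseteq> - Q" if "i \<in> SB" for i
    using B flips_subset[of "V i"] that by blast
  then have supp_B: "\<forall>x. x \<inter> Q \<noteq> {} \<longrightarrow> ground_state (zero_outside SB J) x = 0"
    by (intro allI impI ground_state_eq_0_outside[where Q="- Q"])
      (auto simp: zero_outside_def split: if_splits)
  show "\<Phi> \<in> qstates Nq" "sq_norm Nq \<Phi> = 1" "Im (\<Phi> {}) = 0" "Re (\<Phi> {}) > 0"
    unfolding \<Phi>_def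
    using tensor_phased_state[OF phased_ground_state(1-4)[OF box] phased_ground_state(1-4)[OF box] supp_A supp_B]
    by simp_all
qed

text \<open>The condition 3 * (\<Sum>i<Nc. \<bar>J i\<bar>) < gap puts the energy bound
  - (\<Sum>n<Nq. h n) + 2 * (\<Sum>i<Nc. \<bar>J i\<bar>) below the threshold of
  eigenvectors_below_gap_proportional.\<close>

lemma ground_state_eq_low_eigenvector:
  assumes J: "\<forall>i<Nc. \<bar>J i\<bar> < \<epsilon>"
    and gap: "\<forall>n<Nq. gap \<le> 2 * h n" and small: "3 * (\<Sum>i<Nc. \<bar>J i\<bar>) < gap"
    and ground_energy: "\<forall>e. hamiltonian Nq h Nc V J (ground_state J) =
        (\<lambda>x. complex_of_real e * ground_state J x) \<longrightarrow> e \<le> - (\<Sum>n<Nq. h n) + 2 * (\<Sum>i<Nc. \<bar>J i\<bar>)"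
    and \<Phi>: "\<Phi> \<in> qstates Nq" "sq_norm Nq \<Phi> = 1" "Im (\<Phi> {}) = 0" "Re (\<Phi> {}) > 0"
    and eigen: "hamiltonian Nq h Nc V J \<Phi> = (\<lambda>x. complex_of_real e * \<Phi> x)"
    and e: "e \<le> - (\<Sum>n<Nq. h n) + 2 * (\<Sum>i<Nc. \<bar>J i\<bar>)"
  shows "ground_state J = \<Phi>"
proof -
  obtain e0 where e0: "hamiltonian Nq h Nc V J (ground_state J) = (\<lambda>x. complex_of_real e0 * ground_state J x)"
    using phased_ground_state(5)[OF J] by blast
  have "(\<lambda>x. \<Phi> {} * ground_state J x) = (\<lambda>x. ground_state J {} * \<Phi> x)"
    using ground_energy e0 e small
    by (intro eigenvectors_below_gap_proportional[OF V_pauli h_pos gap phased_ground_state(1)[OF J]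
          \<Phi>(1) e0 eigen]) auto
  then show ?thesis
    by (rule phased_states_eq_if_proportional[OF _ phased_ground_state(2-4)[OF J] \<Phi>(2-4)])
qed

lemma ground_state_tensor:
  assumes disjoint: "SA \<inter> SB = {}"
    and A: "\<forall>i\<in>SA. {n. V i n \<noteq> PI} \<subseteq> Q" and B: "\<forall>i\<in>SB. {n. V i n \<noteq> PI} \<inter> Q = {}"
  shows "\<exists>r>0. \<forall>J. (\<forall>i<Nc. \<bar>J i\<bar> < r) \<longrightarrow>
           ground_state (zero_outside (SA \<union> SB) J) =
             tensor Q (ground_state (zero_outside SA J)) (ground_state (zero_outside SB J))"
proof -
  obtain r0 where r0: "r0 > 0" "r0 \<le> \<epsilon>"
    and energy: "\<forall>J e. (\<forall>i<Nc. \<bar>J i\<bar> < r0) \<longrightarrow>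
      hamiltonian Nq h Nc V J (ground_state J) = (\<lambda>x. complex_of_real e * ground_state J x) \<longrightarrow>
      e \<le> - (\<Sum>n<Nq. h n) + 2 * (\<Sum>i<Nc. \<bar>J i\<bar>)"
    using ground_state_energy_le by blast
  obtain gap where gap: "gap > 0" "\<forall>n<Nq. gap \<le> 2 * h n"
    using exists_gap by blast
  define r where "r = min r0 (gap / (3 * (real Nc + 1)))"
  have "ground_state (zero_outside (SA \<union> SB) J) =
      tensor Q (ground_state (zero_outside SA J)) (ground_state (zero_outside SB J))"
    if J: "\<forall>i<Nc. \<bar>J i\<bar> < r" for J
  proof -
    have J_r0: "\<forall>i<Nc. \<bar>J i\<bar> < r0" and J_eps: "\<forall>i<Nc. \<bar>J i\<bar> < \<epsilon>"
      using J r0 unfolding r_def by force+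
    note box_r = abs_zero_outside_less[OF J] and box_r0 = abs_zero_outside_less[OF J_r0]
      and box = abs_zero_outside_less[OF J_eps]
    obtain eA eB where
      eA: "hamiltonian Nq h Nc V (zero_outside SA J) (ground_state (zero_outside SA J)) =
             (\<lambda>x. complex_of_real eA * ground_state (zero_outside SA J) x)"
      and eB: "hamiltonian Nq h Nc V (zero_outside SB J) (ground_state (zero_outside SB J)) =
             (\<lambda>x. complex_of_real eB * ground_state (zero_outside SB J) x)"
      using phased_ground_state(5)[OF box] by metis
    have eA_le: "eA \<le> - (\<Sum>n<Nq. h n) + 2 * (\<Sum>i<Nc. \<bar>zero_outside SA J i\<bar>)"
      and eB_le: "eB \<le> - (\<Sum>n<Nq. h n) + 2 * (\<Sum>i<Nc. \<bar>zero_outside SB J i\<bar>)"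
      using energy box_r0[of SA] box_r0[of SB] eA eB by simp_all
    show ?thesis
    proof (rule ground_state_eq_low_eigenvector[OF box gap(2) _ _
          tensor_ground_states(2-5)[OF disjoint A B J_eps eA eB]
          tensor_ground_states(1)[OF disjoint A B J_eps eA eB]])
      show "3 * (\<Sum>i<Nc. \<bar>zero_outside (SA \<union> SB) J i\<bar>) < gap"
        using box_r unfolding r_def by (intro three_sum_abs_less[OF gap(1)]) (auto intro: less_imp_le)
      show "\<forall>e. hamiltonian Nq h Nc V (zero_outside (SA \<union> SB) J) (ground_state (zero_outside (SA \<union> SB) J)) =
          (\<lambda>x. complex_of_real e * ground_state (zero_outside (SA \<union> SB) J) x) \<longrightarrow>
          e \<le> - (\<Sum>n<Nq. h n) + 2 * (\<Sum>i<Nc. \<bar>zero_outside (SA \<union> SB) J i\<bar>)"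
        using energy box_r0[of "SA \<union> SB"] by simp
      show "eA + eB + (\<Sum>n<Nq. h n) \<le> - (\<Sum>n<Nq. h n) + 2 * (\<Sum>i<Nc. \<bar>zero_outside (SA \<union> SB) J i\<bar>)"
        using eA_le eB_le by (simp add: sum_abs_zero_outside_Un[OF disjoint])
    qed
  qed
  moreover have "r > 0"
    unfolding r_def using r0 gap by simp
  ultimately show ?thesis
    by blast
qed

lemma ground_state_tensor_coeffs:
  assumes disjoint: "SA \<inter> SB = {}"
    and A: "\<forall>i\<in>SA. {n. V i n \<noteq> PI} \<subseteq> Q" and B: "\<forall>i\<in>SB. {n. V i n \<noteq> PI} \<inter> Q = {}"
    and FA: "FA \<subseteq> Q" and FB: "FB \<inter> Q = {}"
    and k: "k \<in> multi_idx Nc" "{i. k i \<noteq> 0} \<subseteq> SA \<union> SB"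
  shows "taylor_coeff k (FA \<union> FB) = taylor_coeff (zero_outside SA k) FA * taylor_coeff (zero_outside SB k) FB"
proof -
  obtain r where r: "r > 0" and tensor: "\<forall>J. (\<forall>i<Nc. \<bar>J i\<bar> < r) \<longrightarrow>
      ground_state (zero_outside (SA \<union> SB) J) =
        tensor Q (ground_state (zero_outside SA J)) (ground_state (zero_outside SB J))"
    using ground_state_tensor[OF disjoint A B] by blast
  define L where "L k = (if {i. k i \<noteq> 0} \<subseteq> SA \<union> SB then taylor_coeff k (FA \<union> FB) else 0)" for k
  define R where "R k = (if {i. k i \<noteq> 0} \<subseteq> SA \<union> SB
                 then taylor_coeff (zero_outside SA k) FA * taylor_coeff (zero_outside SB k) FB else 0)" for k
  have expansions: "\<forall>J. (\<forall>i<Nc. \<bar>J i\<bar> < min r \<epsilon>) \<longrightarrow>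
    ((\<lambda>k. complex_of_real (mono_pow Nc J k) * L k) has_sum
       ground_state (zero_outside SA J) FA * ground_state (zero_outside SB J) FB) (multi_idx Nc) \<and>
    ((\<lambda>k. complex_of_real (mono_pow Nc J k) * R k) has_sum
       ground_state (zero_outside SA J) FA * ground_state (zero_outside SB J) FB) (multi_idx Nc)"
  proof (intro allI impI conjI)
    fix J :: "nat \<Rightarrow> real"
    assume "\<forall>i<Nc. \<bar>J i\<bar> < min r \<epsilon>"
    then have J_r: "\<forall>i<Nc. \<bar>J i\<bar> < r" and J_eps: "\<forall>i<Nc. \<bar>J i\<bar> < \<epsilon>"
      by simp_all
    have "(FA \<union> FB) \<inter> Q = FA" "(FA \<union> FB) - Q = FB"
      using FA FB by blast+
    then have "ground_state (zero_outside (SA \<union> SB) J) (FA \<union> FB) =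
        ground_state (zero_outside SA J) FA * ground_state (zero_outside SB J) FB"
      using tensor[rule_format, OF J_r[rule_format]] by (simp add: tensor_def)
    then show "((\<lambda>k. complex_of_real (mono_pow Nc J k) * L k) has_sum
        (ground_state (zero_outside SA J) FA * ground_state (zero_outside SB J) FB)) (multi_idx Nc)"
      using has_sum_taylor_coeff_zero_outside[OF J_eps, of "SA \<union> SB" "FA \<union> FB"]
      unfolding L_def has_sum_mono_pow_zero_outside_iff by simp
    show "((\<lambda>k. complex_of_real (mono_pow Nc J k) * R k) has_sum
        (ground_state (zero_outside SA J) FA * ground_state (zero_outside SB J) FB)) (multi_idx Nc)"
      using has_sum_mono_pow_disjoint_mult[OF disjoint
          has_sum_taylor_coeff_zero_outside[OF J_eps] has_sum_taylor_coeff_zero_outside[OF J_eps]]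
      unfolding R_def has_sum_mono_pow_zero_outside_iff by simp
  qed
  have "L k = R k"
    by (rule mono_pow_series_coeffs_unique[OF _ expansions k(1)]) (use r eps_pos in simp)
  then show ?thesis
    using k(2) by (simp add: L_def R_def)
qed

lemma op_pow_ket0_subset:
  assumes "\<And>i. i < Nc \<Longrightarrow> k i \<noteq> 0 \<Longrightarrow> flips (V i) \<subseteq> Q"
  obtains c F where "cmod c = 1" "F \<subseteq> Q" "op_pow V k Nc ket0 = (\<lambda>x. if x = F then c else 0)"
proof -
  obtain c F where c: "cmod c = 1" and F: "F \<subseteq> (\<Union>i\<in>{i. i < Nc \<and> k i \<noteq> 0}. flips (V i))"
    and op: "op_pow V k Nc ket0 = (\<lambda>x. if x = F then c else 0)"
    using op_pow_ket0[where m=Nc and k=k and V=V] by blast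
  have "F \<subseteq> Q"
  proof
    fix n
    assume "n \<in> F"
    then obtain i where "i < Nc" "k i \<noteq> 0" "n \<in> flips (V i)"
      using F by blast
    with assms show "n \<in> Q"
      by blast
  qed
  from c this op show ?thesis
    by (rule that)
qed

lemma coeff_add_eq_mult:
  assumes disjoint: "SA \<inter> SB = {}"
    and A: "\<forall>i\<in>SA. {n. V i n \<noteq> PI} \<subseteq> Q" and B: "\<forall>i\<in>SB. {n. V i n \<noteq> PI} \<inter> Q = {}"
    and a: "a \<in> multi_idx Nc" "{i. a i \<noteq> 0} \<subseteq> SA"
    and b: "b \<in> multi_idx Nc" "{i. b i \<noteq> 0} \<subseteq> SB"
  shows "C (\<lambda>i. a i + b i) = C a * C b"
proof -
  have "flips (V i) \<subseteq> Q" if "a i \<noteq> 0" for i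
    using A a(2) flips_subset[of "V i"] that by blast
  then obtain ca FA where ca: "cmod ca = 1" and FA: "FA \<subseteq> Q"
    and op_a: "op_pow V a Nc ket0 = (\<lambda>x. if x = FA then ca else 0)"
    by (rule op_pow_ket0_subset)
  have "flips (V i) \<subseteq> - Q" if "b i \<noteq> 0" for i
    using B b(2) flips_subset[of "V i"] that by blast
  then obtain cb FB where cb: "cmod cb = 1" and FB: "FB \<subseteq> - Q"
    and op_b: "op_pow V b Nc ket0 = (\<lambda>x. if x = FB then cb else 0)"
    by (rule op_pow_ket0_subset)
  have op_sum: "op_pow V (\<lambda>i. a i + b i) Nc ket0 (FA \<union> FB) = ca * cb"
  proof -
    have "(FA \<union> FB) \<inter> Q = FA" "(FA \<union> FB) - Q = FB"
      using FA FB by blast+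
    moreover have "\<forall>i<Nc. a i = 0 \<or> b i = 0"
      using disjoint a(2) b(2) by blast
    moreover have "\<forall>i<Nc. a i \<noteq> 0 \<longrightarrow> {n. V i n \<noteq> PI} \<subseteq> Q"
      using A a(2) by blast
    moreover have "\<forall>i<Nc. b i \<noteq> 0 \<longrightarrow> {n. V i n \<noteq> PI} \<inter> Q = {}"
      using B b(2) by blast
    ultimately show ?thesis
      by (simp add: op_pow_ket0_tensor tensor_def op_a op_b)
  qed
  have "FB \<inter> Q = {}" "{i. a i + b i \<noteq> 0} \<subseteq> SA \<union> SB"
    using FB a(2) b(2) by auto
  from ground_state_tensor_coeffs[OF disjoint A B FA this(1) add_in_multi_idx[OF a(1) b(1)] this(2)]
  have "complex_of_real (C (\<lambda>i. a i + b i)) * (ca * cb) = complex_of_real (C a * C b) * (ca * cb)"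
    unfolding zero_outside_add[OF disjoint a(2) b(2)] taylor_coeff_def by (simp add: op_sum op_a op_b ac_simps)
  moreover have "ca * cb \<noteq> 0"
    using ca cb by auto
  ultimately show ?thesis
    by (metis mult_right_cancel of_real_eq_iff)
qed

lemma ground_state_identity_coupling:
  assumes Vi: "\<forall>n. V i n = PI" and J: "\<forall>j<Nc. \<bar>J j\<bar> < \<epsilon>"
  shows "ground_state (zero_outside {i} J) = ket0"
proof -
  let ?\<psi> = "ground_state (zero_outside {i} J)"
  note box = abs_zero_outside_less[OF J, of "{i}"]
  have "flips (V i) = {}"
    using Vi unfolding flips_def by simp
  then have supp: "?\<psi> x = 0" if "x \<noteq> {}" for x
    using that by (intro ground_state_eq_0_outside[where Q="{}"]) (auto simp: zero_outside_def)
  then have "sq_norm Nq ?\<psi> = (\<Sum>x\<in>{{}}. (cmod (?\<psi> x))\<^sup>2)"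
    unfolding sq_norm_def by (intro sum.mono_neutral_right) auto
  then have "?\<psi> {} = 1"
    using phased_ground_state(2-4)[OF box] by (simp add: cmod_def complex_eq_iff power2_eq_1_iff)
  with supp show ?thesis
    unfolding ket0_def by auto
qed

lemma coeff_eq_0_if_only_identity_coupling:
  assumes i: "i < Nc" and Vi: "\<forall>n. V i n = PI"
    and k: "k \<in> multi_idx Nc" "{j. k j \<noteq> 0} \<subseteq> {i}" "k \<noteq> (\<lambda>_. 0)"
  shows "C k = 0"
proof -
  define L where "L k = (if {j. k j \<noteq> 0} \<subseteq> {i} then taylor_coeff k {} else 0)" for k
  define R :: "(nat \<Rightarrow> nat) \<Rightarrow> complex" where "R k = (if k = (\<lambda>_. 0) then 1 else 0)" for k
  have "\<forall>J. (\<forall>j<Nc. \<bar>J j\<bar> < \<epsilon>) \<longrightarrow>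
      ((\<lambda>k. complex_of_real (mono_pow Nc J k) * L k) has_sum 1) (multi_idx Nc) \<and>
      ((\<lambda>k. complex_of_real (mono_pow Nc J k) * R k) has_sum 1) (multi_idx Nc)"
  proof (intro allI impI conjI)
    fix J :: "nat \<Rightarrow> real"
    assume J: "\<forall>j<Nc. \<bar>J j\<bar> < \<epsilon>"
    have "ket0 {} = 1"
      by (simp add: ket0_def)
    with has_sum_taylor_coeff_zero_outside[OF J, of "{i}" "{}"]
    show "((\<lambda>k. complex_of_real (mono_pow Nc J k) * L k) has_sum 1) (multi_idx Nc)"
      unfolding has_sum_mono_pow_zero_outside_iff L_def ground_state_identity_coupling[OF Vi J] by simp
    show "((\<lambda>k. complex_of_real (mono_pow Nc J k) * R k) has_sum 1) (multi_idx Nc)"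
      by (rule has_sum_finite_neutralI[where B="{\<lambda>_. 0}"]) (auto simp: R_def zero_in_multi_idx)
  qed
  then have "L k = R k"
    by (rule mono_pow_series_coeffs_unique[OF eps_pos _ k(1)])
  moreover have "flips (V j) \<subseteq> {}" if "k j \<noteq> 0" for j
    using k(2) Vi that unfolding flips_def by auto
  then obtain c F where "cmod c = 1" "F \<subseteq> {}" "op_pow V k Nc ket0 = (\<lambda>x. if x = F then c else 0)"
    by (rule op_pow_ket0_subset)
  ultimately show ?thesis
    using k(2,3) by (auto simp: L_def R_def taylor_coeff_def)
qed

lemma coeff_eq_0_if_identity_coupling:
  assumes i: "i < Nc" and Vi: "\<forall>n. V i n = PI" and k: "k \<in> multi_idx Nc" "k i \<noteq> 0"
  shows "C k = 0"
proof -
  let ?rest = "- {i}"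
  have "{j. zero_outside {i} k j \<noteq> 0} \<subseteq> {i}" "{j. zero_outside ?rest k j \<noteq> 0} \<subseteq> ?rest"
    by (auto simp: zero_outside_def)
  with zero_outside_in_multi_idx[OF k(1)]
  have "C (\<lambda>j. zero_outside {i} k j + zero_outside ?rest k j) = C (zero_outside {i} k) * C (zero_outside ?rest k)"
    by (intro coeff_add_eq_mult[where Q="{}" and SA="{i}" and SB="?rest"]) (use Vi in auto)
  moreover have "(\<lambda>j. zero_outside {i} k j + zero_outside ?rest k j) = k"
    by (rule zero_outside_split) auto
  moreover have "C (zero_outside {i} k) = 0"
    using k zero_outside_in_multi_idx[OF k(1), of "{i}"]
    by (intro coeff_eq_0_if_only_identity_coupling[OF i Vi]) (auto simp: zero_outside_def fun_eq_iff)
  ultimately show ?thesis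
    by simp
qed

lemma coeff_add_eq_mult_if_disjoint_support:
  assumes kA: "kA \<in> multi_idx Nc" and kB: "kB \<in> multi_idx Nc"
    and disjoint: "support Nc V kA \<inter> support Nc V kB = {}"
  shows "C (\<lambda>i. kA i + kB i) = C kA * C kB"
proof (cases "\<exists>i. kA i \<noteq> 0 \<and> kB i \<noteq> 0")
  case True
  then obtain i where i: "kA i \<noteq> 0" "kB i \<noteq> 0"
    by blast
  have "i < Nc"
    using multi_idx_nonzero_entry[OF kA i(1)] .
  have Vi: "\<forall>n. V i n = PI"
    using disjoint i \<open>i < Nc\<close> unfolding support_def by blast
  have "C (\<lambda>i. kA i + kB i) = 0"
    using i by (intro coeff_eq_0_if_identity_coupling[OF \<open>i < Nc\<close> Vi add_in_multi_idx[OF kA kB]]) simp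
  moreover have "C kA = 0"
    by (rule coeff_eq_0_if_identity_coupling[OF \<open>i < Nc\<close> Vi kA i(1)])
  ultimately show ?thesis
    by simp
next
  case False
  show ?thesis
  proof (rule coeff_add_eq_mult[where Q="support Nc V kA"])
    show "{i. kA i \<noteq> 0} \<inter> {i. kB i \<noteq> 0} = {}"
      using False by blast
    show "\<forall>i\<in>{i. kA i \<noteq> 0}. {n. V i n \<noteq> PI} \<subseteq> support Nc V kA"
      using multi_idx_nonzero_entry[OF kA] unfolding support_def by blast
    show "\<forall>i\<in>{i. kB i \<noteq> 0}. {n. V i n \<noteq> PI} \<inter> support Nc V kA = {}"
      using multi_idx_nonzero_entry[OF kB] disjoint unfolding support_def by blast
  qed (use kA kB in auto)
qed

end

theorem lemma2:
  fixes Nq Nc :: nat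
    and h :: "nat \<Rightarrow> real"
    and V :: "nat \<Rightarrow> nat \<Rightarrow> pauli"
    and C :: "(nat \<Rightarrow> nat) \<Rightarrow> real"
    and kA kB :: "nat \<Rightarrow> nat"
  assumes h_pos: "\<forall>n<Nq. h n > 0"
    and V_pauli: "\<forall>i<Nc. is_pauli_string Nq (V i)"
    and expansion: "\<exists>\<epsilon>>0. \<forall>J :: nat \<Rightarrow> real. (\<forall>i<Nc. \<bar>J i\<bar> < \<epsilon>) \<longrightarrow>
        (\<exists>\<psi>. (\<forall>x. ((\<lambda>k. complex_of_real (mono_pow Nc J k * C k) * op_pow V k Nc ket0 x)
                        has_sum \<psi> x) (multi_idx Nc))
             \<and> is_phased_ground_state Nq (hamiltonian Nq h Nc V J) \<psi>)"
    and kA: "kA \<in> multi_idx Nc" and kB: "kB \<in> multi_idx Nc"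
    and disj: "support Nc V kA \<inter> support Nc V kB = {}"
  shows "C (\<lambda>i. kA i + kB i) = C kA * C kB"
proof -
  obtain \<epsilon> where "ground_state_expansion Nq Nc h V C \<epsilon>"
    using expansion h_pos V_pauli unfolding ground_state_expansion_def by blast
  then interpret ground_state_expansion Nq Nc h V C \<epsilon> .
  show ?thesis
    by (rule coeff_add_eq_mult_if_disjoint_support[OF kA kB disj])
qed

end
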